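(* Let $S$ be a finite semigroup with an anti-involution $*$, let $R$ be a commutative ring with $1$, and let $\alpha$ be a twisting from $S$ into $R$ with $\alpha(x,y)=\alpha(y^*,x^* )$ for all $x,y\in S$. Suppose that for each $\mathcal D$-class $D$ there is an idempotent $1_D\in D$ with $1_D^*=1_D$; let $G_D$ be the $\mathcal H$-class of $1_D$. Suppose that for each $\mathcal D$-class $D$ and all $x\,\mathcal L\,1_D$, $y\,\mathcal R\,1_D$, the element $\alpha(x,y)$ is a unit of $R$. Suppose that for each $D$ the twisted group algebra $R^\alpha[G_D]$ (twisting $\alpha|_{G_D\times G_D}$) is cellular with cell datum $(\Lambda_D,M_D,C,* )$, where $*$ is the linear extension of $*|_{G_D}$. Let $\mathcal D$ be the set of $\mathcal D$-classes, $\mathcal L_D$ the set of $\mathcal L$-classes in $D$, $\Lambda=\{(D,\lambda)\mid D\in\mathcal D,\lambda\in\Lambda_D\}$ ordered by $(D_1,\lambda_1)\le(D_2,\lambda_2)$ iff $D_1<_{\mathcal D}D_2$ or ($D_1=D_2$ and $\lambda_1\le\lambda_2$ in $\Lambda_{D_1}$), $M(D,\lambda)=\mathcal L_D\times M_D(\lambda)$, choose for each $L\in\mathcal L_D$ an element $u_L\in L$ with $u_L\,\mathcal R\,1_D$, and set \[C^{(D,\lambda)}_{(L,s)(K,t)}=u_L^*\cdot C^\lambda_{st}\cdot u_K\] (product in $R^\alpha[S]$). Then $R^\alpha[S]$ is cellular with cell datum $(\Lambda,M,C,* )$, where $*$ is the linear extension of $*$ to $R^\alpha[S]$.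
   Context: Green's relations on a semigroup $S$ ($S^1$ = $S$ with identity adjoined): $x\le_{\mathcal R}y$ iff $x\in yS^1$; $x\le_{\mathcal L}y$ iff $x\in S^1y$; $x\le_{\mathcal J}y$ iff $x\in S^1yS^1$; $\mathcal R,\mathcal L,\mathcal J$ the associated equivalences; $\mathcal H=\mathcal R\cap\mathcal L$; $\mathcal D$ generated by $\mathcal R\cup\mathcal L$. For finite $S$, $\mathcal D=\mathcal J$ and $\le_{\mathcal J}$ induces a partial order $\le_{\mathcal D}$ on $\mathcal D$-classes; $<_{\mathcal D}$ is its strict version. An anti-involution of $S$: $(x^* )^*=x$, $(xy)^*=y^*x^*$. A twisting $\alpha:S\times S\to R$ satisfies $\alpha(x,y)\alpha(xy,z)=\alpha(x,yz)\alpha(y,z)$; $R^\alpha[S]$ is the free $R$-module on $S$ with product $x\cdot y=\alpha(x,y)(xy)$. An anti-involution of an $R$-algebra is $R$-linear with $(a^* )^*=a$, $(ab)^*=b^*a^*$. Cellular algebra with cell datum $(\Lambda,M,C,* )$: (C1) $\Lambda$ finite poset, finite sets $M(\lambda)$, and $\{C^\lambda_{st}\}$ an $R$-basis; (C2) $*$ anti-involution with $(C^\lambda_{st})^*=C^\lambda_{ts}$; (C3) for all $\lambda,s,a$ there are $r_a(s',s)\in R$ with $aC^\lambda_{st}\in\sum_{s'}r_a(s',s)C^\lambda_{s't}+A(<\lambda)$ for all $t$, where $A(<\lambda)$ is the span of the $C^\mu_{s''t''}$ with $\mu<\lambda$. *)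

theory Defs
  imports Main
begin

text \<open>A finite semigroup is modelled as a finite type of class semigroup_mult
  (carrier = UNIV). Green's relations, with S^1 = S plus an adjoined identity.\<close>

definition R_le :: "'a::semigroup_mult \<Rightarrow> 'a \<Rightarrow> bool" where
  "R_le x y \<longleftrightarrow> x = y \<or> (\<exists>s. x = y * s)"

definition L_le :: "'a::semigroup_mult \<Rightarrow> 'a \<Rightarrow> bool" where
  "L_le x y \<longleftrightarrow> x = y \<or> (\<exists>s. x = s * y)"

definition J_le :: "'a::semigroup_mult \<Rightarrow> 'a \<Rightarrow> bool" where
  "J_le x y \<longleftrightarrow> x = y \<or> (\<exists>s. x = s * y) \<or> (\<exists>t. x = y * t) \<or> (\<exists>s t. x = s * y * t)"

definition R_eq :: "'a::semigroup_mult \<Rightarrow> 'a \<Rightarrow> bool" where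
  "R_eq x y \<longleftrightarrow> R_le x y \<and> R_le y x"

definition L_eq :: "'a::semigroup_mult \<Rightarrow> 'a \<Rightarrow> bool" where
  "L_eq x y \<longleftrightarrow> L_le x y \<and> L_le y x"

definition H_eq :: "'a::semigroup_mult \<Rightarrow> 'a \<Rightarrow> bool" where
  "H_eq x y \<longleftrightarrow> R_eq x y \<and> L_eq x y"

definition D_eq :: "'a::semigroup_mult \<Rightarrow> 'a \<Rightarrow> bool" where
  "D_eq = (\<lambda>x y. R_eq x y \<or> L_eq x y)\<^sup>*\<^sup>*"

definition D_class :: "'a::semigroup_mult \<Rightarrow> 'a set" where
  "D_class x = {y. D_eq x y}"

definition L_class :: "'a::semigroup_mult \<Rightarrow> 'a set" where
  "L_class x = {y. L_eq x y}"

definition H_class :: "'a::semigroup_mult \<Rightarrow> 'a set" where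
  "H_class x = {y. H_eq x y}"

definition D_classes :: "'a::semigroup_mult set set" where
  "D_classes = range D_class"

definition L_classes_in :: "'a::semigroup_mult set \<Rightarrow> 'a set set" where
  "L_classes_in D = L_class ` D"

definition D_le :: "'a::semigroup_mult set \<Rightarrow> 'a set \<Rightarrow> bool" where
  "D_le D1 D2 \<longleftrightarrow> (\<exists>x\<in>D1. \<exists>y\<in>D2. J_le x y)"

definition D_less :: "'a::semigroup_mult set \<Rightarrow> 'a set \<Rightarrow> bool" where
  "D_less D1 D2 \<longleftrightarrow> D_le D1 D2 \<and> D1 \<noteq> D2"

definition anti_involution :: "('a::semigroup_mult \<Rightarrow> 'a) \<Rightarrow> bool" where
  "anti_involution st \<longleftrightarrow> (\<forall>x. st (st x) = x) \<and> (\<forall>x y. st (x * y) = st y * st x)"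

definition twisting :: "('a::semigroup_mult \<Rightarrow> 'a \<Rightarrow> 'r::comm_ring_1) \<Rightarrow> bool" where
  "twisting \<alpha> \<longleftrightarrow> (\<forall>x y z. \<alpha> x y * \<alpha> (x * y) z = \<alpha> x (y * z) * \<alpha> y z)"

text \<open>The twisted semigroup algebra R^\<alpha>[G] on a (multiplicatively closed) subset G:
  elements are coefficient functions supported on G.\<close>
definition tsa_carrier :: "'a set \<Rightarrow> ('a \<Rightarrow> 'r::comm_ring_1) set" where
  "tsa_carrier G = {f. \<forall>z. z \<notin> G \<longrightarrow> f z = 0}"

definition tsa_mult :: "'a::semigroup_mult set \<Rightarrow> ('a \<Rightarrow> 'a \<Rightarrow> 'r::comm_ring_1)
    \<Rightarrow> ('a \<Rightarrow> 'r) \<Rightarrow> ('a \<Rightarrow> 'r) \<Rightarrow> ('a \<Rightarrow> 'r)" where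
  "tsa_mult G \<alpha> f g = (\<lambda>z. \<Sum>x\<in>G. \<Sum>y\<in>G. if x * y = z then \<alpha> x y * f x * g y else 0)"

definition tsa_delta :: "'a \<Rightarrow> ('a \<Rightarrow> 'r::comm_ring_1)" where
  "tsa_delta x = (\<lambda>z. if z = x then 1 else 0)"

text \<open>Linear extension of an involution st: sum f(x) x \<mapsto> sum f(x) st(x).\<close>
definition star_lin :: "('a \<Rightarrow> 'a) \<Rightarrow> ('a \<Rightarrow> 'r::comm_ring_1) \<Rightarrow> ('a \<Rightarrow> 'r)" where
  "star_lin st f = (\<lambda>z. f (st z))"

definition cell_index :: "'l set \<Rightarrow> ('l \<Rightarrow> 'm set) \<Rightarrow> ('l \<times> 'm \<times> 'm) set" where
  "cell_index \<Lambda> M = {(l, s, t). l \<in> \<Lambda> \<and> s \<in> M l \<and> t \<in> M l}"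

definition cell_lower :: "'l set \<Rightarrow> ('l \<Rightarrow> 'l \<Rightarrow> bool) \<Rightarrow> ('l \<Rightarrow> 'm set)
    \<Rightarrow> ('l \<Rightarrow> 'm \<Rightarrow> 'm \<Rightarrow> 'a \<Rightarrow> 'r::comm_ring_1) \<Rightarrow> 'l \<Rightarrow> ('a \<Rightarrow> 'r) set" where
  "cell_lower \<Lambda> le M C l =
     {f. \<exists>c. f = (\<lambda>z. \<Sum>i\<in>{i\<in>cell_index \<Lambda> M. le (fst i) l \<and> fst i \<noteq> l}.
                         c i * C (fst i) (fst (snd i)) (snd (snd i)) z)}"

definition cellular :: "'a::semigroup_mult set \<Rightarrow> ('a \<Rightarrow> 'a \<Rightarrow> 'r::comm_ring_1) \<Rightarrow> ('a \<Rightarrow> 'a)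
    \<Rightarrow> 'l set \<Rightarrow> ('l \<Rightarrow> 'l \<Rightarrow> bool) \<Rightarrow> ('l \<Rightarrow> 'm set) \<Rightarrow> ('l \<Rightarrow> 'm \<Rightarrow> 'm \<Rightarrow> 'a \<Rightarrow> 'r) \<Rightarrow> bool" where
  "cellular G \<alpha> st \<Lambda> le M C \<longleftrightarrow>
     \<comment> \<open>(C1)\<close>
     finite \<Lambda> \<and>
     (\<forall>l\<in>\<Lambda>. le l l) \<and>
     (\<forall>a\<in>\<Lambda>. \<forall>b\<in>\<Lambda>. le a b \<and> le b a \<longrightarrow> a = b) \<and>
     (\<forall>a\<in>\<Lambda>. \<forall>b\<in>\<Lambda>. \<forall>c\<in>\<Lambda>. le a b \<and> le b c \<longrightarrow> le a c) \<and>
     (\<forall>l\<in>\<Lambda>. finite (M l)) \<and>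
     (\<forall>l\<in>\<Lambda>. \<forall>s\<in>M l. \<forall>t\<in>M l. C l s t \<in> tsa_carrier G) \<and>
     (\<forall>f\<in>tsa_carrier G. \<exists>!c. (\<forall>i. i \<notin> cell_index \<Lambda> M \<longrightarrow> c i = 0) \<and>
         f = (\<lambda>z. \<Sum>i\<in>cell_index \<Lambda> M. c i * C (fst i) (fst (snd i)) (snd (snd i)) z)) \<and>
     \<comment> \<open>(C2): star_lin st is an anti-involution of the algebra, C^l_{st}* = C^l_{ts}\<close>
     (\<forall>f\<in>(tsa_carrier G :: ('a \<Rightarrow> 'r) set). star_lin st f \<in> tsa_carrier G \<and> star_lin st (star_lin st f) = f) \<and>
     (\<forall>f\<in>tsa_carrier G. \<forall>g\<in>tsa_carrier G.
         star_lin st (tsa_mult G \<alpha> f g) = tsa_mult G \<alpha> (star_lin st g) (star_lin st f)) \<and>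
     (\<forall>l\<in>\<Lambda>. \<forall>s\<in>M l. \<forall>t\<in>M l. star_lin st (C l s t) = C l t s) \<and>
     \<comment> \<open>(C3)\<close>
     (\<forall>l\<in>\<Lambda>. \<forall>s\<in>M l. \<forall>a\<in>tsa_carrier G. \<exists>r. \<forall>t\<in>M l.
         (\<lambda>z. tsa_mult G \<alpha> a (C l s t) z - (\<Sum>s'\<in>M l. r s' * C l s' t z))
           \<in> cell_lower \<Lambda> le M C l)"

end

theory Submission
  imports Defs
begin

text \<open>Every element \<open>y\<close> of a \<open>\<D>\<close>-class \<open>D\<close> has unique Rees coordinates
  \<open>y = u\<^sub>L\<^sup>* g u\<^sub>K\<close> with \<open>g\<close> in the maximal subgroup \<open>G\<^sub>D\<close>, where \<open>L\<close> and \<open>K\<close> are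
  the \<open>\<L>\<close>-classes of \<open>y\<^sup>*\<close> and \<open>y\<close>. Hence the sandwich \<open>c \<mapsto> u\<^sub>L\<^sup>* \<cdot> c \<cdot> u\<^sub>K\<close>
  maps \<open>R\<^sup>\<alpha>[G\<^sub>D]\<close>, up to the unit coefficients \<open>\<alpha>(u\<^sub>L\<^sup>*, g) \<alpha>(u\<^sub>L\<^sup>* g, u\<^sub>K)\<close>,
  isomorphically onto the span of the block \<open>(L, K)\<close> of \<open>D\<close>. The blocks partition \<open>S\<close>,
  so the sandwiched cell bases of the groups form a basis of \<open>R\<^sup>\<alpha>[S]\<close>, and \<open>*\<close> swaps
  the blocks \<open>(L, K)\<close> and \<open>(K, L)\<close>. For (C3), left multiplication by \<open>x\<close> either
  drops the block into a strictly \<open>\<J>\<close>-lower \<open>\<D>\<close>-class, i.e. into \<open>A(<(D, \<lambda>))\<close>,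
  or \<open>x u\<^sub>L\<^sup>*\<close> stays in \<open>D\<close> and equals \<open>u\<^sub>L\<^sub>'\<^sup>* h\<close> with \<open>h \<in> G\<^sub>D\<close>; then (C3) for
  \<open>R\<^sup>\<alpha>[G\<^sub>D]\<close>, applied to \<open>h\<close>, gives (C3) for the block.\<close>

section \<open>Green's relations in finite semigroups\<close>

text \<open>\<open>S\<^sup>1\<close> is realised as \<open>'a option\<close> with \<open>None\<close> the adjoined identity, so that the
  Green preorders become divisibility in a monoid.\<close>

instantiation option :: (semigroup_mult) monoid_mult
begin

definition one_option :: "'a option" where "one_option = None"

fun times_option :: "'a option \<Rightarrow> 'a option \<Rightarrow> 'a option" where
  "times_option None y = y"
| "times_option (Some x) None = Some x"
| "times_option (Some x) (Some y) = Some (x * y)"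

instance proof
  fix a b c :: "'a option"
  show "a * b * c = a * (b * c)" by (cases a; cases b; cases c) (auto simp: mult.assoc)
  show "1 * a = a" by (simp add: one_option_def)
  show "a * 1 = a" by (cases a) (simp_all add: one_option_def)
qed

end

lemma ex_option: "(\<exists>s::'a option. P s) \<longleftrightarrow> P None \<or> (\<exists>s. P (Some s))"
  by (metis option.exhaust)

lemma R_le_iff_option: "R_le x y \<longleftrightarrow> (\<exists>s. Some x = Some y * s)"
  by (auto simp: R_le_def ex_option)

lemma L_le_iff_option: "L_le x y \<longleftrightarrow> (\<exists>s. Some x = s * Some y)"
  by (auto simp: L_le_def ex_option)

lemma J_le_iff_option: "J_le x y \<longleftrightarrow> (\<exists>s t. Some x = s * Some y * t)"
  by (auto simp: J_le_def ex_option)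

lemma R_le_refl [simp]: "R_le x x" by (simp add: R_le_def)
lemma L_le_refl [simp]: "L_le x x" by (simp add: L_le_def)
lemma J_le_refl [simp]: "J_le x x" by (simp add: J_le_def)

lemma R_le_trans: "R_le x y \<Longrightarrow> R_le y z \<Longrightarrow> R_le x z"
  unfolding R_le_iff_option by (metis mult.assoc)

lemma L_le_trans: "L_le x y \<Longrightarrow> L_le y z \<Longrightarrow> L_le x z"
  unfolding L_le_iff_option by (metis mult.assoc)

lemma J_le_trans: "J_le x y \<Longrightarrow> J_le y z \<Longrightarrow> J_le x z"
  unfolding J_le_iff_option by (metis mult.assoc)

lemma R_le_imp_J_le: "R_le x y \<Longrightarrow> J_le x y"
  unfolding R_le_iff_option J_le_iff_option by (metis mult_1)

lemma L_le_imp_J_le: "L_le x y \<Longrightarrow> J_le x y"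
  unfolding L_le_iff_option J_le_iff_option by (metis mult_1_right)

lemma R_le_mult [simp]: "R_le (x * y) x" unfolding R_le_def by blast
lemma L_le_mult [simp]: "L_le (x * y) y" unfolding L_le_def by blast
lemma J_le_mult_left [simp]: "J_le (x * y) x" unfolding J_le_def by blast
lemma J_le_mult_right [simp]: "J_le (x * y) y" unfolding J_le_def by blast
lemma J_le_sandwich [simp]: "J_le (x * y * z) y" unfolding J_le_def by blast

lemma L_le_mult_right: "L_le x y \<Longrightarrow> L_le (x * z) (y * z)"
  unfolding L_le_def by (auto simp: mult.assoc)

lemma R_le_mult_left: "R_le x y \<Longrightarrow> R_le (z * x) (z * y)"
  unfolding R_le_def by (auto simp: mult.assoc)

lemma R_eq_sym: "R_eq x y \<Longrightarrow> R_eq y x" by (simp add: R_eq_def)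
lemma L_eq_sym: "L_eq x y \<Longrightarrow> L_eq y x" by (simp add: L_eq_def)

lemma R_eq_trans: "R_eq x y \<Longrightarrow> R_eq y z \<Longrightarrow> R_eq x z"
  unfolding R_eq_def using R_le_trans by blast

lemma L_eq_trans: "L_eq x y \<Longrightarrow> L_eq y z \<Longrightarrow> L_eq x z"
  unfolding L_eq_def using L_le_trans by blast

lemma L_eq_mult_right: "L_eq x y \<Longrightarrow> L_eq (x * z) (y * z)"
  unfolding L_eq_def using L_le_mult_right by blast

lemma R_eq_mult_left: "R_eq x y \<Longrightarrow> R_eq (z * x) (z * y)"
  unfolding R_eq_def using R_le_mult_left by blast

lemma L_class_eq: "L_eq x y \<Longrightarrow> L_class x = L_class y"
  unfolding L_class_def using L_eq_sym L_eq_trans by blast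

lemma H_class_iff: "g \<in> H_class e \<longleftrightarrow> R_eq g e \<and> L_eq g e"
  unfolding H_class_def H_eq_def using R_eq_sym L_eq_sym by blast

lemma R_le_idempotent: "e * e = e \<Longrightarrow> R_le y e \<Longrightarrow> e * y = y"
  unfolding R_le_def by (metis mult.assoc)

lemma L_le_idempotent: "e * e = e \<Longrightarrow> L_le y e \<Longrightarrow> y * e = y"
  unfolding L_le_def by (metis mult.assoc)

lemma left_fixed_R_le: "R_le y x \<Longrightarrow> a * x = x \<Longrightarrow> a * y = y"
  unfolding R_le_def by (metis mult.assoc)

lemma right_fixed_L_le: "L_le y x \<Longrightarrow> x * a = x \<Longrightarrow> y * a = y"
  unfolding L_le_def by (metis mult.assoc)

lemma H_class_mult_closed:
  assumes e: "e * e = e" and g: "g \<in> H_class e" and h: "h \<in> H_class e"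
  shows "g * h \<in> H_class e"
proof -
  have "g * e = g" "e * h = h"
    using g h e L_le_idempotent R_le_idempotent by (auto simp: H_class_iff L_eq_def R_eq_def)
  moreover have "R_eq (g * h) (g * e)" "L_eq (g * h) (e * h)"
    using g h by (auto simp: H_class_iff intro: R_eq_mult_left L_eq_mult_right)
  ultimately show ?thesis using g h by (auto simp: H_class_iff intro: R_eq_trans L_eq_trans)
qed

lemma finite_monoid_idempotent_power:
  fixes c :: "'b::{monoid_mult,finite}"
  shows "\<exists>n>0. c ^ n * c ^ n = c ^ n"
proof -
  have "\<not> inj (\<lambda>n::nat. c ^ n)"
    using finite_UNIV infinite_UNIV_nat finite_imageD finite_subset subset_UNIV by metis
  then obtain i j :: nat where ij: "i < j" "c ^ i = c ^ j"
    unfolding inj_def by (metis linorder_neqE_nat)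
  define p where "p = j - i"
  have p: "p > 0" "j = i + p" using ij by (auto simp: p_def)
  have period: "c ^ (m + k * p) = c ^ m" if "m \<ge> i" for m k
  proof (induction k)
    case (Suc k)
    have "c ^ (m + Suc k * p) = c ^ (m + k * p - i) * c ^ j"
      using that p by (simp add: power_add[symmetric] algebra_simps)
    also have "\<dots> = c ^ (m + k * p)"
      using that ij(2)[symmetric] by (simp add: power_add[symmetric])
    finally show ?case using Suc by simp
  qed simp
  define n where "n = (i + 1) * p"
  have "i \<le> i * p" using p by simp
  moreover have "n = i * p + p" by (simp add: n_def algebra_simps)
  ultimately have "n \<ge> i" by linarith
  then have "c ^ n * c ^ n = c ^ n"
    using period[of n "i + 1"] by (simp add: n_def power_add[symmetric])
  moreover have "n > 0" using p by (simp add: n_def)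
  ultimately show ?thesis by blast
qed

lemma sandwich_fixed_power:
  fixes y a c :: "'b::monoid_mult"
  assumes "y = a * y * c"
  shows "y = a ^ n * y * c ^ n"
proof (induction n)
  case (Suc n)
  have "a ^ Suc n * y * c ^ Suc n = a ^ n * (a * y * c) * c ^ n"
    by (simp only: power_Suc2[of a] power_Suc[of c] mult.assoc)
  then show ?case using Suc assms by simp
qed simp

lemma sandwich_fixed_right:
  fixes y a c :: "'b::{monoid_mult,finite}"
  assumes "y = a * y * c"
  shows "\<exists>n>0. y = y * c ^ n"
proof -
  obtain n where n: "n > 0" "c ^ n * c ^ n = c ^ n" using finite_monoid_idempotent_power by blast
  have "y = a ^ n * y * c ^ n" using sandwich_fixed_power[OF assms] .
  also have "\<dots> = a ^ n * y * c ^ n * c ^ n" using n by (simp add: mult.assoc)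
  also have "\<dots> = y * c ^ n" using sandwich_fixed_power[OF assms, of n] by simp
  finally show ?thesis using n by blast
qed

lemma sandwich_fixed_left:
  fixes y a c :: "'b::{monoid_mult,finite}"
  assumes "y = a * y * c"
  shows "\<exists>n>0. y = a ^ n * y"
proof -
  obtain n where n: "n > 0" "a ^ n * a ^ n = a ^ n" using finite_monoid_idempotent_power by blast
  have "y = a ^ n * y * c ^ n" using sandwich_fixed_power[OF assms] .
  also have "\<dots> = a ^ n * (a ^ n * y * c ^ n)" using n by (simp add: mult.assoc[symmetric])
  also have "\<dots> = a ^ n * y" using sandwich_fixed_power[OF assms, of n] by simp
  finally show ?thesis using n by blast
qed

lemma R_le_stable:
  fixes x y :: "'a::{finite,semigroup_mult}"
  assumes "R_le x y" "J_le y x"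
  shows "R_le y x"
proof -
  obtain s where s: "Some x = Some y * s" using assms(1) R_le_iff_option by blast
  obtain a b where ab: "Some y = a * Some x * b" using assms(2) J_le_iff_option by blast
  have "Some y = a * Some y * (s * b)" using ab unfolding s by (simp add: mult.assoc)
  then obtain n where n: "n > 0" "Some y = Some y * (s * b) ^ n" using sandwich_fixed_right by blast
  then obtain m where "n = Suc m" by (cases n) auto
  then have "Some y = Some x * (b * (s * b) ^ m)" using n s by (simp add: mult.assoc power_Suc)
  then show ?thesis using R_le_iff_option by blast
qed

lemma L_le_stable:
  fixes x y :: "'a::{finite,semigroup_mult}"
  assumes "L_le x y" "J_le y x"
  shows "L_le y x"
proof -
  obtain s where s: "Some x = s * Some y" using assms(1) L_le_iff_option by blast
  obtain a b where ab: "Some y = a * Some x * b" using assms(2) J_le_iff_option by blast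
  have "Some y = (a * s) * Some y * b" using ab unfolding s by (simp add: mult.assoc)
  then obtain n where n: "n > 0" "Some y = (a * s) ^ n * Some y" using sandwich_fixed_left by blast
  then obtain m where "n = Suc m" by (cases n) auto
  then have "Some y = (a * s) ^ m * (a * s) * Some y" using n by (metis power_Suc2)
  then have "Some y = ((a * s) ^ m * a) * Some x" unfolding s by (simp add: mult.assoc)
  then show ?thesis using L_le_iff_option by blast
qed

lemma H_class_if_below:
  fixes g e :: "'a::{finite,semigroup_mult}"
  assumes "R_le g e" "L_le g e" "J_le e g"
  shows "g \<in> H_class e"
  using assms R_le_stable L_le_stable by (auto simp: H_class_iff R_eq_def L_eq_def)

abbreviation J_eq :: "'a::semigroup_mult \<Rightarrow> 'a \<Rightarrow> bool" where
  "J_eq x y \<equiv> J_le x y \<and> J_le y x"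

lemma D_eq_imp_J_eq: "D_eq x y \<Longrightarrow> J_eq x y"
  unfolding D_eq_def
proof (induction rule: rtranclp_induct)
  case (step y z)
  then show ?case unfolding R_eq_def L_eq_def by (meson J_le_trans L_le_imp_J_le R_le_imp_J_le)
qed simp

lemma J_eq_imp_D_eq:
  fixes x y :: "'a::{finite,semigroup_mult}"
  assumes "J_le x y" "J_le y x"
  shows "D_eq x y"
proof -
  obtain s t where st: "Some x = s * Some y * t" using assms(1) J_le_iff_option by blast
  obtain w where w: "s * Some y = Some w" by (cases s) auto
  have "L_le w y" using w L_le_iff_option by metis
  moreover have "J_le y w" using assms(2) w st R_le_iff_option by (metis J_le_trans R_le_imp_J_le)
  ultimately have "L_eq w y" using L_le_stable L_eq_def by blast
  have "R_le x w" using w st R_le_iff_option by metis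
  moreover have "J_le w x" using \<open>L_le w y\<close> assms(2) L_le_imp_J_le J_le_trans by blast
  ultimately have "R_eq x w" using R_le_stable R_eq_def by blast
  with \<open>L_eq w y\<close> show ?thesis unfolding D_eq_def
    by (metis (mono_tags, lifting) converse_rtranclp_into_rtranclp r_into_rtranclp)
qed

lemma D_class_iff_J_eq:
  fixes x y :: "'a::{finite,semigroup_mult}"
  shows "y \<in> D_class x \<longleftrightarrow> J_eq x y"
  unfolding D_class_def using D_eq_imp_J_eq J_eq_imp_D_eq by blast

lemma D_class_eq_iff_J_eq:
  fixes x y :: "'a::{finite,semigroup_mult}"
  shows "D_class x = D_class y \<longleftrightarrow> J_eq x y"
  unfolding D_class_def D_class_iff_J_eq[unfolded D_class_def, simplified]
  by (auto intro: J_le_trans)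

lemma D_class_self: "(x::'a::{finite,semigroup_mult}) \<in> D_class x"
  by (simp add: D_class_iff_J_eq)

lemma D_classes_finite: "finite (D_classes :: 'a::{finite,semigroup_mult} set set)"
  by (simp add: D_classes_def)

lemma D_class_in_D_classes: "D_class x \<in> D_classes"
  by (simp add: D_classes_def)

lemma D_le_D_class_iff:
  fixes x y :: "'a::{finite,semigroup_mult}"
  shows "D_le (D_class x) (D_class y) \<longleftrightarrow> J_le x y"
proof
  assume "D_le (D_class x) (D_class y)"
  then obtain a b where "a \<in> D_class x" "b \<in> D_class y" "J_le a b" unfolding D_le_def by blast
  then show "J_le x y" unfolding D_class_iff_J_eq using J_le_trans by blast
next
  assume "J_le x y"
  then show "D_le (D_class x) (D_class y)" unfolding D_le_def using D_class_self by blast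
qed

lemma D_class_eq_if_mem:
  fixes x :: "'a::{finite,semigroup_mult}"
  assumes "D \<in> D_classes" "x \<in> D"
  shows "D = D_class x"
proof -
  obtain y where "D = D_class y" using assms(1) by (auto simp: D_classes_def)
  then show ?thesis using assms(2) D_class_iff_J_eq D_class_eq_iff_J_eq by metis
qed

lemma D_le_antisym:
  fixes D1 D2 :: "'a::{finite,semigroup_mult} set"
  assumes "D1 \<in> D_classes" "D2 \<in> D_classes" "D_le D1 D2" "D_le D2 D1"
  shows "D1 = D2"
  using assms unfolding D_classes_def by (metis D_le_D_class_iff D_class_eq_iff_J_eq imageE)

lemma D_le_trans:
  fixes D1 D2 D3 :: "'a::{finite,semigroup_mult} set"
  assumes "D1 \<in> D_classes" "D2 \<in> D_classes" "D3 \<in> D_classes" "D_le D1 D2" "D_le D2 D3"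
  shows "D_le D1 D3"
  using assms unfolding D_classes_def by (metis D_le_D_class_iff J_le_trans imageE)

lemma D_less_trans:
  fixes D1 D2 D3 :: "'a::{finite,semigroup_mult} set"
  assumes "D1 \<in> D_classes" "D2 \<in> D_classes" "D3 \<in> D_classes" "D_less D1 D2" "D_less D2 D3"
  shows "D_less D1 D3"
  using assms unfolding D_less_def using D_le_trans D_le_antisym by blast

lemma D_less_asym:
  fixes D1 D2 :: "'a::{finite,semigroup_mult} set"
  assumes "D1 \<in> D_classes" "D2 \<in> D_classes" "D_less D1 D2"
  shows "\<not> D_less D2 D1"
  using assms unfolding D_less_def using D_le_antisym by blast

section \<open>Anti-involutions and Rees coordinates\<close>

context
  fixes st :: "'a::semigroup_mult \<Rightarrow> 'a"
  assumes anti: "anti_involution st"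
begin

lemma anti_involution_involutive [simp]: "st (st x) = x"
  using anti by (simp add: anti_involution_def)

lemma anti_involution_mult [simp]: "st (x * y) = st y * st x"
  using anti by (simp add: anti_involution_def)

lemma anti_involution_R_le: "R_le x y \<Longrightarrow> L_le (st x) (st y)"
  unfolding R_le_def L_le_def by auto

lemma anti_involution_L_le: "L_le x y \<Longrightarrow> R_le (st x) (st y)"
  unfolding R_le_def L_le_def by auto

lemma anti_involution_R_eq: "R_eq x y \<Longrightarrow> L_eq (st x) (st y)"
  unfolding R_eq_def L_eq_def using anti_involution_R_le by blast

lemma anti_involution_L_eq: "L_eq x y \<Longrightarrow> R_eq (st x) (st y)"
  unfolding R_eq_def L_eq_def using anti_involution_L_le by blast

lemma anti_involution_J_le: "J_le x y \<Longrightarrow> J_le (st x) (st y)"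
proof -
  assume "J_le x y"
  then obtain s t where "Some x = s * Some y * t" unfolding J_le_iff_option by blast
  then have "Some (st x) = map_option st t * Some (st y) * map_option st s"
    by (cases s; cases t) (auto simp: mult.assoc)
  then show ?thesis unfolding J_le_iff_option by blast
qed

end

locale D_class_coordinates =
  fixes st :: "'a::{finite,semigroup_mult} \<Rightarrow> 'a"
    and one :: "'a set \<Rightarrow> 'a"
    and u :: "'a set \<Rightarrow> 'a"
  assumes anti_involution: "anti_involution st"
    and one_D: "\<forall>D\<in>D_classes. one D \<in> D \<and> one D * one D = one D \<and> st (one D) = one D"
    and u_L: "\<forall>D\<in>D_classes. \<forall>L\<in>L_classes_in D. u L \<in> L \<and> R_eq (u L) (one D)"
begin

lemmas st_st [simp] = anti_involution_involutive[OF anti_involution]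
lemmas st_mult [simp] = anti_involution_mult[OF anti_involution]

abbreviation G :: "'a set \<Rightarrow> 'a set" where
  "G D \<equiv> H_class (one D)"

abbreviation rees :: "'a set \<Rightarrow> 'a set \<Rightarrow> 'a \<Rightarrow> 'a" where
  "rees L K g \<equiv> st (u L) * g * u K"

context
  fixes D :: "'a set"
  assumes D: "D \<in> D_classes"
begin

lemma one_in_D: "one D \<in> D" and one_idem: "one D * one D = one D" and st_one: "st (one D) = one D"
  using one_D D by auto

lemma mem_D_iff: "y \<in> D \<longleftrightarrow> J_eq (one D) y"
  using D_class_eq_if_mem[OF D one_in_D] D_class_iff_J_eq by blast

lemma st_mem_D: "y \<in> D \<Longrightarrow> st y \<in> D"
  using mem_D_iff anti_involution_J_le[OF anti_involution] st_one by metis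

lemma L_class_in_D: "x \<in> D \<Longrightarrow> L_class x \<in> L_classes_in D"
  by (simp add: L_classes_in_def)

lemma L_classes_in_finite: "finite (L_classes_in D)"
  by (simp add: L_classes_in_def)

lemma G_elem:
  assumes "g \<in> G D"
  shows "one D * g = g" "g * one D = g" "g \<in> D"
  using assms one_idem R_le_idempotent L_le_idempotent R_le_imp_J_le mem_D_iff
  by (auto simp: H_class_iff R_eq_def L_eq_def)

lemma L_eq_in_D: "x \<in> D \<Longrightarrow> y \<in> D \<Longrightarrow> L_le x y \<Longrightarrow> L_eq x y"
  unfolding L_eq_def using L_le_stable mem_D_iff J_le_trans by blast

lemma R_eq_in_D: "x \<in> D \<Longrightarrow> y \<in> D \<Longrightarrow> R_le x y \<Longrightarrow> R_eq x y"
  unfolding R_eq_def using R_le_stable mem_D_iff J_le_trans by blast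

context
  fixes L :: "'a set"
  assumes L: "L \<in> L_classes_in D"
begin

lemma u_in_L: "u L \<in> L" and u_R_eq_one: "R_eq (u L) (one D)"
  using u_L D L by auto

lemma u_in_D: "u L \<in> D"
  using u_R_eq_one mem_D_iff R_le_imp_J_le by (auto simp: R_eq_def)

lemma L_class_u: "L = L_class (u L)"
proof -
  obtain x where "L = L_class x" using L by (auto simp: L_classes_in_def)
  then show ?thesis using u_in_L L_class_eq by (auto simp: L_class_def)
qed

lemma st_u_L_eq_one: "L_eq (st (u L)) (one D)"
  using anti_involution_R_eq[OF anti_involution u_R_eq_one] by (simp only: st_one)

lemma one_mult_u: "one D * u L = u L"
  using R_le_idempotent[OF one_idem] u_R_eq_one unfolding R_eq_def by blast

lemma st_u_mult_one: "st (u L) * one D = st (u L)"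
  using L_le_idempotent[OF one_idem] st_u_L_eq_one unfolding L_eq_def by blast

lemma u_right_invertible: "\<exists>w. one D = u L * w"
  using u_R_eq_one unfolding R_eq_def R_le_def by (metis one_mult_u)

lemma st_u_left_invertible: "\<exists>w. one D = w * st (u L)"
  using u_right_invertible by (metis st_mult st_one)

end

lemma rees_cancel:
  assumes L: "L \<in> L_classes_in D" and K: "K \<in> L_classes_in D"
  shows "\<exists>a b. \<forall>g\<in>G D. g = a * rees L K g * b"
proof -
  obtain w where w: "one D = u K * w" using u_right_invertible[OF K] by blast
  obtain w' where w': "one D = w' * st (u L)" using st_u_left_invertible[OF L] by blast
  have "g = w' * rees L K g * w" if g: "g \<in> G D" for g
  proof -
    have "w' * rees L K g * w = (w' * st (u L)) * g * (u K * w)" by (simp add: mult.assoc)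
    then show ?thesis using G_elem[OF g] by (simp add: w[symmetric] w'[symmetric])
  qed
  then show ?thesis by blast
qed

lemma rees_inj:
  assumes "L \<in> L_classes_in D" "K \<in> L_classes_in D" "g \<in> G D" "g' \<in> G D"
    and "rees L K g = rees L K g'"
  shows "g = g'"
  using rees_cancel[OF assms(1,2)] assms(3-5) by metis

lemma rees_in_D:
  assumes L: "L \<in> L_classes_in D" and K: "K \<in> L_classes_in D" and g: "g \<in> G D"
  shows "rees L K g \<in> D"
proof -
  obtain a b where "g = a * rees L K g * b" using rees_cancel[OF L K] g by metis
  then have "J_le g (rees L K g)" by (metis J_le_sandwich)
  moreover have "J_le (rees L K g) g" by simp
  ultimately show ?thesis using G_elem(3)[OF g] mem_D_iff J_le_trans by blast
qed

lemma L_class_rees: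
  assumes L: "L \<in> L_classes_in D" and K: "K \<in> L_classes_in D" and g: "g \<in> G D"
  shows "L_class (rees L K g) = K"
  using L_eq_in_D[OF rees_in_D[OF assms] u_in_D[OF K]] L_class_u[OF K] L_class_eq by force

lemma L_class_st_rees:
  assumes L: "L \<in> L_classes_in D" and K: "K \<in> L_classes_in D" and g: "g \<in> G D"
  shows "L_class (st (rees L K g)) = L"
proof -
  have "R_le (rees L K g) (st (u L))" by (metis R_le_mult mult.assoc)
  then have "R_eq (rees L K g) (st (u L))"
    using R_eq_in_D[OF rees_in_D[OF assms] st_mem_D[OF u_in_D[OF L]]] by blast
  then have "L_eq (st (rees L K g)) (u L)"
    using anti_involution_R_eq[OF anti_involution] by fastforce
  then show ?thesis using L_class_u[OF L] L_class_eq by metis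
qed

lemma rees_surj:
  assumes y: "y \<in> D"
  shows "\<exists>g\<in>G D. y = rees (L_class (st y)) (L_class y) g"
proof -
  define L K where "L = L_class (st y)" and "K = L_class y"
  have L: "L \<in> L_classes_in D" and K: "K \<in> L_classes_in D"
    using L_def K_def L_class_in_D st_mem_D y by auto
  obtain w where w: "one D = u K * w" using u_right_invertible[OF K] by blast
  obtain w' where w': "one D = w' * st (u L)" using st_u_left_invertible[OF L] by blast
  have "R_eq y (st (u L))"
    using u_in_L[OF L] anti_involution_L_eq[OF anti_involution, of "st y"]
    by (auto simp: L_def L_class_def intro: R_eq_sym)
  then have yR: "R_le y (st (u L))" by (simp add: R_eq_def)
  have yL: "L_le y (u K)" using u_in_L[OF K] by (simp add: K_def L_class_def L_eq_def)
  define g where "g = w' * y * w"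
  have "st (u L) * w' * st (u L) = st (u L)" by (simp add: mult.assoc w'[symmetric] st_u_mult_one[OF L])
  then have "st (u L) * w' * y = y" using left_fixed_R_le[OF yR] by (metis mult.assoc)
  moreover have "u K * (w * u K) = u K" by (simp add: mult.assoc[symmetric] w[symmetric] one_mult_u[OF K])
  then have "y * (w * u K) = y" using right_fixed_L_le[OF yL] by blast
  ultimately have y_eq: "y = rees L K g" by (simp add: g_def mult.assoc)
  have "R_le g (w' * y)" by (simp add: g_def)
  moreover have "R_le (w' * y) (one D)" using R_le_mult_left[OF yR, of w'] w' by simp
  moreover have "L_le (y * w) (one D)" using L_le_mult_right[OF yL, of w] w by simp
  moreover have "L_le g (y * w)" by (simp add: g_def mult.assoc)
  moreover have "J_le (one D) g"
    using y y_eq mem_D_iff J_le_trans J_le_sandwich by metis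
  ultimately have "g \<in> G D" using H_class_if_below R_le_trans L_le_trans by blast
  then show ?thesis using y_eq unfolding L_def K_def by blast
qed

lemma left_mult_st_u:
  assumes L: "L \<in> L_classes_in D" and xy: "x * st (u L) \<in> D"
  shows "\<exists>L'\<in>L_classes_in D. \<exists>h\<in>G D. x * st (u L) = st (u L') * h"
proof -
  \<comment> \<open>\<open>x u\<^sub>L\<^sup>*\<close> is \<open>\<L>\<close>-related to \<open>1\<^sub>D\<close>, so its right Rees factor lies in \<open>G\<^sub>D\<close> and
    is absorbed into \<open>h\<close>.\<close>
  define y where "y = x * st (u L)"
  have "L_eq y (st (u L))" using L_eq_in_D[OF _ st_mem_D[OF u_in_D[OF L]]] xy by (simp add: y_def)
  then have "L_class y = L_class (one D)"
    using st_u_L_eq_one[OF L] L_eq_trans L_class_eq by blast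
  moreover obtain g where g: "g \<in> G D" and y_eq: "y = rees (L_class (st y)) (L_class y) g"
    using rees_surj xy y_def by blast
  moreover have "u (L_class (one D)) \<in> G D"
  proof -
    have LK: "L_class (one D) \<in> L_classes_in D" using L_class_in_D one_in_D by blast
    have "L_eq (u (L_class (one D))) (one D)"
      using u_in_L[OF LK] L_eq_sym by (auto simp: L_class_def)
    then show ?thesis using u_R_eq_one[OF LK] H_class_iff by blast
  qed
  ultimately have "g * u (L_class y) \<in> G D" using H_class_mult_closed[OF one_idem g] by simp
  moreover have "L_class (st y) \<in> L_classes_in D" using L_class_in_D st_mem_D xy y_def by blast
  ultimately show ?thesis using y_eq by (metis y_def mult.assoc)
qed

end

lemma rees_eq_iff:
  assumes D: "D \<in> D_classes" and L: "L \<in> L_classes_in D" and K: "K \<in> L_classes_in D" and g: "g \<in> G D"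
    and D': "D' \<in> D_classes" and L': "L' \<in> L_classes_in D'" and K': "K' \<in> L_classes_in D'"
    and g': "g' \<in> G D'"
    and eq: "rees L K g = rees L' K' g'"
  shows "D' = D \<and> L' = L \<and> K' = K \<and> g' = g"
proof -
  have "D' = D"
    using rees_in_D[OF D L K g] rees_in_D[OF D' L' K' g'] eq D_class_eq_if_mem D D' by metis
  moreover have "L' = L" using L_class_st_rees[OF D L K g] L_class_st_rees[OF D' L' K' g'] eq by simp
  moreover have "K' = K" using L_class_rees[OF D L K g] L_class_rees[OF D' L' K' g'] eq by simp
  ultimately show ?thesis using rees_inj[OF D L K g] g' eq by simp
qed

end

section \<open>The twisted semigroup algebra\<close>

abbreviation tmult :: "('a::{finite,semigroup_mult} \<Rightarrow> 'a \<Rightarrow> 'r::comm_ring_1) \<Rightarrow> ('a \<Rightarrow> 'r) \<Rightarrow> ('a \<Rightarrow> 'r) \<Rightarrow> 'a \<Rightarrow> 'r"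
  where "tmult \<alpha> f g \<equiv> tsa_mult UNIV \<alpha> f g"

lemma tsa_delta_apply [simp]: "tsa_delta x z = (if z = x then 1 else 0)"
  by (simp add: tsa_delta_def)

lemma tmult_apply: "tmult \<alpha> f g z = (\<Sum>x\<in>UNIV. \<Sum>y\<in>UNIV. if x * y = z then \<alpha> x y * f x * g y else 0)"
  by (simp add: tsa_mult_def)

lemma tmult_delta_left: "tmult \<alpha> (tsa_delta a) g z = (\<Sum>y\<in>UNIV. if a * y = z then \<alpha> a y * g y else 0)"
proof -
  have "tmult \<alpha> (tsa_delta a) g z
      = (\<Sum>x\<in>UNIV. if x = a then (\<Sum>y\<in>UNIV. if a * y = z then \<alpha> a y * g y else 0) else 0)"
    unfolding tmult_apply by (rule sum.cong) (auto cong: if_cong)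
  then show ?thesis by simp
qed

lemma tmult_delta_delta: "tmult \<alpha> (tsa_delta a) (tsa_delta b) z = \<alpha> a b * tsa_delta (a * b) z"
proof -
  have "tmult \<alpha> (tsa_delta a) (tsa_delta b) z
      = (\<Sum>y\<in>UNIV. if y = b then (if a * b = z then \<alpha> a b else 0) else 0)"
    unfolding tmult_delta_left by (rule sum.cong) auto
  then show ?thesis by simp
qed

lemma sum_tsa_delta: "(f::'a::finite \<Rightarrow> 'r::comm_ring_1) z = (\<Sum>x\<in>UNIV. f x * tsa_delta x z)"
proof -
  have "(\<Sum>x\<in>UNIV. f x * tsa_delta x z) = (\<Sum>x\<in>UNIV. if z = x then f z else 0)"
    by (rule sum.cong) auto
  then show ?thesis by (simp add: eq_commute[of z])
qed

lemma tmult_sum_left: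
  "tmult \<alpha> (\<lambda>z. \<Sum>i\<in>I. c i * F i z) g z = (\<Sum>i\<in>I. c i * tmult \<alpha> (F i) g z)"
proof -
  have "tmult \<alpha> (\<lambda>z. \<Sum>i\<in>I. c i * F i z) g z
      = (\<Sum>x\<in>UNIV. \<Sum>y\<in>UNIV. \<Sum>i\<in>I. if x * y = z then c i * (\<alpha> x y * F i x * g y) else 0)"
    unfolding tmult_apply
    by (intro sum.cong refl) (auto simp: sum_distrib_left sum_distrib_right algebra_simps)
  also have "\<dots> = (\<Sum>i\<in>I. c i * tmult \<alpha> (F i) g z)"
    unfolding tmult_apply
    by (simp add: sum.swap[of _ I] sum_distrib_left if_distrib cong: if_cong)
  finally show ?thesis .
qed

lemma tmult_sum_right:
  "tmult \<alpha> f (\<lambda>z. \<Sum>i\<in>I. c i * F i z) z = (\<Sum>i\<in>I. c i * tmult \<alpha> f (F i) z)"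
proof -
  have "tmult \<alpha> f (\<lambda>z. \<Sum>i\<in>I. c i * F i z) z
      = (\<Sum>x\<in>UNIV. \<Sum>y\<in>UNIV. \<Sum>i\<in>I. if x * y = z then c i * (\<alpha> x y * f x * F i y) else 0)"
    unfolding tmult_apply
    by (intro sum.cong refl) (auto simp: sum_distrib_left sum_distrib_right algebra_simps)
  also have "\<dots> = (\<Sum>i\<in>I. c i * tmult \<alpha> f (F i) z)"
    unfolding tmult_apply
    by (simp add: sum.swap[of _ I] sum_distrib_left if_distrib cong: if_cong)
  finally show ?thesis .
qed

lemma tmult_scale_left: "tmult \<alpha> (\<lambda>z. k * f z) g z = k * tmult \<alpha> f g z"
  using tmult_sum_left[where I="{()}" and c="\<lambda>_. k" and F="\<lambda>_. f"] by simp

lemma tmult_scale_right: "tmult \<alpha> f (\<lambda>z. k * g z) z = k * tmult \<alpha> f g z"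
  using tmult_sum_right[where I="{()}" and c="\<lambda>_. k" and F="\<lambda>_. g"] by simp

lemma tmult_expand_left: "tmult \<alpha> f g = (\<lambda>z. \<Sum>x\<in>UNIV. f x * tmult \<alpha> (tsa_delta x) g z)"
proof
  fix z
  have "f = (\<lambda>z. \<Sum>x\<in>UNIV. f x * tsa_delta x z)" using sum_tsa_delta by (rule ext)
  then have "tmult \<alpha> f g z = tmult \<alpha> (\<lambda>z. \<Sum>x\<in>UNIV. f x * tsa_delta x z) g z" by simp
  then show "tmult \<alpha> f g z = (\<Sum>x\<in>UNIV. f x * tmult \<alpha> (tsa_delta x) g z)"
    by (simp only: tmult_sum_left)
qed

lemma tmult_expand_right: "tmult \<alpha> f g = (\<lambda>z. \<Sum>y\<in>UNIV. g y * tmult \<alpha> f (tsa_delta y) z)"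
proof
  fix z
  have "g = (\<lambda>z. \<Sum>x\<in>UNIV. g x * tsa_delta x z)" using sum_tsa_delta by (rule ext)
  then have "tmult \<alpha> f g z = tmult \<alpha> f (\<lambda>z. \<Sum>x\<in>UNIV. g x * tsa_delta x z) z" by simp
  then show "tmult \<alpha> f g z = (\<Sum>y\<in>UNIV. g y * tmult \<alpha> f (tsa_delta y) z)"
    by (simp only: tmult_sum_right)
qed

lemma tmult_delta_delta_fun: "tmult \<alpha> (tsa_delta a) (tsa_delta b) = (\<lambda>z. \<alpha> a b * tsa_delta (a * b) z)"
  using tmult_delta_delta by (rule ext)

lemma tmult_assoc:
  assumes tw: "twisting \<alpha>"
  shows "tmult \<alpha> (tmult \<alpha> f g) h = tmult \<alpha> f (tmult \<alpha> g h)"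
proof
  fix z
  have lhs: "tmult \<alpha> (tmult \<alpha> f g) h z = (\<Sum>x\<in>UNIV. f x * (\<Sum>y\<in>UNIV. g y * (\<alpha> x y *
      (\<Sum>w\<in>UNIV. h w * (\<alpha> (x * y) w * tsa_delta (x * y * w) z)))))"
    by (subst tmult_expand_left, simp only: tmult_sum_left, subst tmult_expand_right,
        simp only: tmult_sum_left tmult_delta_delta_fun tmult_scale_left,
        subst tmult_expand_right, simp only: tmult_delta_delta)
  have rhs: "tmult \<alpha> f (tmult \<alpha> g h) z = (\<Sum>x\<in>UNIV. f x * (\<Sum>y\<in>UNIV. g y *
      (\<Sum>w\<in>UNIV. h w * (\<alpha> y w * (\<alpha> x (y * w) * tsa_delta (x * (y * w)) z)))))"
    by (subst tmult_expand_left, subst (2) tmult_expand_left, simp only: tmult_sum_right,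
        subst (2) tmult_expand_right,
        simp only: tmult_sum_right tmult_delta_delta_fun tmult_scale_right tmult_delta_delta)
  have "\<alpha> x y * \<alpha> (x * y) w = \<alpha> x (y * w) * \<alpha> y w" for x y w
    using tw by (simp add: twisting_def)
  then have "\<alpha> x y * (h w * (\<alpha> (x * y) w * d)) = h w * (\<alpha> y w * (\<alpha> x (y * w) * d))" for x y w d
    by (metis mult.assoc mult.commute)
  then show "tmult \<alpha> (tmult \<alpha> f g) h z = tmult \<alpha> f (tmult \<alpha> g h) z"
    unfolding lhs rhs by (simp add: sum_distrib_left mult.assoc)
qed

lemma tmult_delta_sandwich:
  "tmult \<alpha> (tmult \<alpha> (tsa_delta v) c) (tsa_delta w) z
    = (\<Sum>y\<in>UNIV. if v * y * w = z then \<alpha> v y * \<alpha> (v * y) w * c y else 0)"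
proof -
  have "tmult \<alpha> (tmult \<alpha> (tsa_delta v) c) (tsa_delta w) z
      = (\<Sum>y\<in>UNIV. c y * (\<alpha> v y * (\<alpha> (v * y) w * tsa_delta (v * y * w) z)))"
    by (subst tmult_expand_right, simp only: tmult_sum_left tmult_delta_delta_fun
        tmult_scale_left tmult_delta_delta)
  also have "\<dots> = (\<Sum>y\<in>UNIV. if v * y * w = z then \<alpha> v y * \<alpha> (v * y) w * c y else 0)"
    by (rule sum.cong) (auto simp: mult_ac)
  finally show ?thesis .
qed

lemma tsa_carrier_UNIV [simp]: "tsa_carrier UNIV = UNIV"
  by (simp add: tsa_carrier_def)

lemma tsa_mult_eq_tmult:
  fixes f g :: "'a::{finite,semigroup_mult} \<Rightarrow> 'r::comm_ring_1"
  assumes f: "f \<in> tsa_carrier G" and g: "g \<in> tsa_carrier G"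
  shows "tsa_mult G \<alpha> f g = tmult \<alpha> f g"
proof
  fix z
  have "(\<Sum>x\<in>UNIV. \<Sum>y\<in>UNIV. if x * y = z then \<alpha> x y * f x * g y else 0)
      = (\<Sum>x\<in>G. \<Sum>y\<in>UNIV. if x * y = z then \<alpha> x y * f x * g y else 0)"
    by (rule sum.mono_neutral_right) (use f in \<open>auto simp: tsa_carrier_def intro!: sum.neutral\<close>)
  also have "\<dots> = (\<Sum>x\<in>G. \<Sum>y\<in>G. if x * y = z then \<alpha> x y * f x * g y else 0)"
    by (intro sum.cong refl sum.mono_neutral_right) (use g in \<open>auto simp: tsa_carrier_def\<close>)
  finally show "tsa_mult G \<alpha> f g z = tmult \<alpha> f g z" by (simp add: tsa_mult_def)
qed

context
  fixes st :: "'a::{finite,semigroup_mult} \<Rightarrow> 'a"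
  assumes anti: "anti_involution st"
begin

lemma sum_reindex_anti_involution: "(\<Sum>x\<in>UNIV. F x) = (\<Sum>x\<in>UNIV. F (st x))"
proof -
  have "bij st" by (metis bijI' anti_involution_involutive[OF anti])
  then show ?thesis by (simp add: bij_def sum.reindex[symmetric, of st, simplified])
qed

lemma star_lin_delta: "star_lin st (tsa_delta a) = tsa_delta (st a)"
  unfolding star_lin_def tsa_delta_def by (metis anti_involution_involutive[OF anti])

lemma star_lin_tmult:
  assumes \<alpha>_st: "\<forall>x y. \<alpha> x y = \<alpha> (st y) (st x)"
  shows "star_lin st (tmult \<alpha> f g) = tmult \<alpha> (star_lin st g) (star_lin st f)"
proof
  fix z
  have "star_lin st (tmult \<alpha> f g) z
      = (\<Sum>x\<in>UNIV. \<Sum>y\<in>UNIV. if st x * st y = st z then \<alpha> (st x) (st y) * f (st x) * g (st y) else 0)"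
    by (simp add: star_lin_def tmult_apply, subst sum_reindex_anti_involution,
        subst (2) sum_reindex_anti_involution, rule refl)
  also have "\<dots> = (\<Sum>y\<in>UNIV. \<Sum>x\<in>UNIV. if y * x = z then \<alpha> y x * g (st y) * f (st x) else 0)"
  proof (subst sum.swap, intro sum.cong refl)
    fix x y
    have "st x * st y = st z \<longleftrightarrow> y * x = z"
      by (metis anti_involution_involutive[OF anti] anti_involution_mult[OF anti])
    moreover have "\<alpha> (st x) (st y) = \<alpha> y x" using \<alpha>_st anti_involution_involutive[OF anti] by metis
    ultimately show "(if st x * st y = st z then \<alpha> (st x) (st y) * f (st x) * g (st y) else 0) =
        (if y * x = z then \<alpha> y x * g (st y) * f (st x) else 0)" by (simp add: mult_ac)
  qed
  also have "\<dots> = tmult \<alpha> (star_lin st g) (star_lin st f) z"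
    by (simp add: star_lin_def tmult_apply)
  finally show "star_lin st (tmult \<alpha> f g) z = tmult \<alpha> (star_lin st g) (star_lin st f) z" .
qed

end

section \<open>Cell data\<close>

abbreviation cell_basis :: "('l \<Rightarrow> 'm \<Rightarrow> 'm \<Rightarrow> 'a \<Rightarrow> 'r) \<Rightarrow> 'l \<times> 'm \<times> 'm \<Rightarrow> 'a \<Rightarrow> 'r" where
  "cell_basis C i \<equiv> C (fst i) (fst (snd i)) (snd (snd i))"

definition cell_index_below :: "'l set \<Rightarrow> ('l \<Rightarrow> 'l \<Rightarrow> bool) \<Rightarrow> ('l \<Rightarrow> 'm set) \<Rightarrow> 'l \<Rightarrow> ('l \<times> 'm \<times> 'm) set"
  where "cell_index_below \<Lambda> le M l = {i \<in> cell_index \<Lambda> M. le (fst i) l \<and> fst i \<noteq> l}"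

lemma mem_cell_index [simp]: "(l, s, t) \<in> cell_index \<Lambda> M \<longleftrightarrow> l \<in> \<Lambda> \<and> s \<in> M l \<and> t \<in> M l"
  by (simp add: cell_index_def)

lemma cell_index_finite:
  assumes "finite \<Lambda>" "\<And>l. l \<in> \<Lambda> \<Longrightarrow> finite (M l)"
  shows "finite (cell_index \<Lambda> M)"
proof -
  have "cell_index \<Lambda> M = (SIGMA l:\<Lambda>. M l \<times> M l)" by (auto simp: cell_index_def)
  then show ?thesis using assms by auto
qed

lemma cell_lower_iff:
  "f \<in> cell_lower \<Lambda> le M C l \<longleftrightarrow>
     (\<exists>c. f = (\<lambda>z. \<Sum>i\<in>cell_index_below \<Lambda> le M l. c i * cell_basis C i z))"
  by (simp add: cell_lower_def cell_index_below_def)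

lemma cell_lower_zero: "(\<lambda>z. 0) \<in> cell_lower \<Lambda> le M C l"
  unfolding cell_lower_iff by (rule exI[of _ "\<lambda>_. 0"]) simp

lemma cell_lower_add:
  assumes "f \<in> cell_lower \<Lambda> le M C l" "g \<in> cell_lower \<Lambda> le M C l"
  shows "(\<lambda>z. f z + g z) \<in> cell_lower \<Lambda> le M C l"
proof -
  obtain c d where "f = (\<lambda>z. \<Sum>i\<in>cell_index_below \<Lambda> le M l. c i * cell_basis C i z)"
    and "g = (\<lambda>z. \<Sum>i\<in>cell_index_below \<Lambda> le M l. d i * cell_basis C i z)"
    using assms unfolding cell_lower_iff by blast
  then have "(\<lambda>z. f z + g z) = (\<lambda>z. \<Sum>i\<in>cell_index_below \<Lambda> le M l. (c i + d i) * cell_basis C i z)"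
    by (simp add: sum.distrib distrib_right)
  then show ?thesis unfolding cell_lower_iff by (intro exI[of _ "\<lambda>i. c i + d i"])
qed

lemma cell_lower_scale:
  assumes "f \<in> cell_lower \<Lambda> le M C l"
  shows "(\<lambda>z. k * f z) \<in> cell_lower \<Lambda> le M C l"
proof -
  obtain c where "f = (\<lambda>z. \<Sum>i\<in>cell_index_below \<Lambda> le M l. c i * cell_basis C i z)"
    using assms unfolding cell_lower_iff by blast
  then have "(\<lambda>z. k * f z) = (\<lambda>z. \<Sum>i\<in>cell_index_below \<Lambda> le M l. (k * c i) * cell_basis C i z)"
    by (simp add: sum_distrib_left mult.assoc)
  then show ?thesis unfolding cell_lower_iff by (intro exI[of _ "\<lambda>i. k * c i"])
qed

lemma cell_lower_sum:
  "finite A \<Longrightarrow> (\<And>x. x \<in> A \<Longrightarrow> F x \<in> cell_lower \<Lambda> le M C l)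
    \<Longrightarrow> (\<lambda>z. \<Sum>x\<in>A. F x z) \<in> cell_lower \<Lambda> le M C l"
proof (induction A rule: finite_induct)
  case empty
  then show ?case using cell_lower_zero by simp
next
  case (insert a A)
  then show ?case using cell_lower_add[of "F a" \<Lambda> le M C l] by simp
qed

lemma cell_lower_basis:
  assumes "finite (cell_index \<Lambda> M)" and i: "i \<in> cell_index_below \<Lambda> le M l"
  shows "cell_basis C i \<in> cell_lower \<Lambda> le M C l"
proof -
  have fin: "finite (cell_index_below \<Lambda> le M l)"
    using assms(1) by (simp add: cell_index_below_def)
  have "(\<Sum>j\<in>cell_index_below \<Lambda> le M l. (if j = i then 1 else 0) * cell_basis C j z) = cell_basis C i z"
    for z
    using i fin by (simp add: if_distrib if_distribR cong: if_cong)
  then have "cell_basis C i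
      = (\<lambda>z. \<Sum>j\<in>cell_index_below \<Lambda> le M l. (if j = i then 1 else 0) * cell_basis C j z)"
    by simp
  then show ?thesis unfolding cell_lower_iff by (intro exI[of _ "\<lambda>j. if j = i then 1 else 0"])
qed

lemma cellularD:
  assumes "cellular G \<alpha> st \<Lambda> le M C"
  shows "finite \<Lambda>" and "\<forall>l\<in>\<Lambda>. le l l"
    and "\<forall>a\<in>\<Lambda>. \<forall>b\<in>\<Lambda>. le a b \<and> le b a \<longrightarrow> a = b"
    and "\<forall>a\<in>\<Lambda>. \<forall>b\<in>\<Lambda>. \<forall>c\<in>\<Lambda>. le a b \<and> le b c \<longrightarrow> le a c"
    and "\<forall>l\<in>\<Lambda>. finite (M l)"
    and "\<forall>l\<in>\<Lambda>. \<forall>s\<in>M l. \<forall>t\<in>M l. C l s t \<in> tsa_carrier G"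
    and "\<forall>f\<in>tsa_carrier G. \<exists>!c. (\<forall>i. i \<notin> cell_index \<Lambda> M \<longrightarrow> c i = 0)
           \<and> f = (\<lambda>z. \<Sum>i\<in>cell_index \<Lambda> M. c i * cell_basis C i z)"
    and "\<forall>l\<in>\<Lambda>. \<forall>s\<in>M l. \<forall>t\<in>M l. star_lin st (C l s t) = C l t s"
    and "\<forall>l\<in>\<Lambda>. \<forall>s\<in>M l. \<forall>a\<in>tsa_carrier G. \<exists>r. \<forall>t\<in>M l.
           (\<lambda>z. tsa_mult G \<alpha> a (C l s t) z - (\<Sum>s'\<in>M l. r s' * C l s' t z)) \<in> cell_lower \<Lambda> le M C l"
  using assms unfolding cellular_def by - (elim conjE, assumption)+

lemma lex_partial_order:
  fixes P :: "'a \<Rightarrow> 'a \<Rightarrow> bool" and le :: "'a \<Rightarrow> 'b \<Rightarrow> 'b \<Rightarrow> bool"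
  assumes P_trans: "\<And>a b c. a \<in> A \<Longrightarrow> b \<in> A \<Longrightarrow> c \<in> A \<Longrightarrow> P a b \<Longrightarrow> P b c \<Longrightarrow> P a c"
    and P_asym: "\<And>a b. a \<in> A \<Longrightarrow> b \<in> A \<Longrightarrow> P a b \<Longrightarrow> \<not> P b a"
    and le_refl: "\<And>a x. a \<in> A \<Longrightarrow> x \<in> B a \<Longrightarrow> le a x x"
    and le_antisym: "\<And>a x y. a \<in> A \<Longrightarrow> x \<in> B a \<Longrightarrow> y \<in> B a \<Longrightarrow> le a x y \<Longrightarrow> le a y x \<Longrightarrow> x = y"
    and le_trans: "\<And>a x y w. a \<in> A \<Longrightarrow> x \<in> B a \<Longrightarrow> y \<in> B a \<Longrightarrow> w \<in> B a
                      \<Longrightarrow> le a x y \<Longrightarrow> le a y w \<Longrightarrow> le a x w"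
  defines "lexle \<equiv> \<lambda>(a, x) (b, y). P a b \<or> (a = b \<and> le a x y)"
  shows "(\<forall>i\<in>Sigma A B. lexle i i)
    \<and> (\<forall>i\<in>Sigma A B. \<forall>j\<in>Sigma A B. lexle i j \<and> lexle j i \<longrightarrow> i = j)
    \<and> (\<forall>i\<in>Sigma A B. \<forall>j\<in>Sigma A B. \<forall>k\<in>Sigma A B. lexle i j \<and> lexle j k \<longrightarrow> lexle i k)"
proof (intro conjI ballI impI)
  fix i assume "i \<in> Sigma A B"
  then show "lexle i i" using le_refl by (cases i) (simp add: lexle_def)
next
  fix i j assume mem: "i \<in> Sigma A B" "j \<in> Sigma A B" and "lexle i j \<and> lexle j i"
  then show "i = j"
  proof (cases i; cases j)
    fix a x b y assume ij: "i = (a, x)" "j = (b, y)" and "lexle i j \<and> lexle j i"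
    then have "P a b \<or> (a = b \<and> le a x y)" "P b a \<or> (b = a \<and> le b y x)"
      by (auto simp: lexle_def)
    then show ?thesis using mem ij P_asym[of a b] P_asym[of a a] le_antisym[of a x y] by auto
  qed
next
  fix i j k assume "i \<in> Sigma A B" "j \<in> Sigma A B" "k \<in> Sigma A B" "lexle i j \<and> lexle j k"
  then show "lexle i k"
  proof (cases i; cases j; cases k)
    fix a x b y c w assume ijk: "i = (a, x)" "j = (b, y)" "k = (c, w)"
      and mem: "i \<in> Sigma A B" "j \<in> Sigma A B" "k \<in> Sigma A B"
      and "lexle i j \<and> lexle j k"
    then have "P a b \<or> (a = b \<and> le a x y)" "P b c \<or> (b = c \<and> le b y w)"
      by (auto simp: lexle_def)
    then have "P a c \<or> (a = c \<and> le a x w)"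
      using mem ijk P_trans[of a b c] le_trans[of a x y w] by auto
    then show ?thesis using ijk by (simp add: lexle_def)
  qed
qed

section \<open>The cell datum of the twisted semigroup algebra\<close>

locale twisted_cell_datum = D_class_coordinates st one u
  for st :: "'a::{finite,semigroup_mult} \<Rightarrow> 'a" and one u +
  fixes \<alpha> :: "'a \<Rightarrow> 'a \<Rightarrow> 'r::comm_ring_1"
    and \<Lambda>D :: "'a set \<Rightarrow> 'l set"
    and leD :: "'a set \<Rightarrow> 'l \<Rightarrow> 'l \<Rightarrow> bool"
    and MD :: "'a set \<Rightarrow> 'l \<Rightarrow> 'm set"
    and CD :: "'a set \<Rightarrow> 'l \<Rightarrow> 'm \<Rightarrow> 'm \<Rightarrow> 'a \<Rightarrow> 'r"
  assumes twisting: "twisting \<alpha>"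
    and \<alpha>_st: "\<forall>x y. \<alpha> x y = \<alpha> (st y) (st x)"
    and \<alpha>_unit: "\<forall>D\<in>D_classes. \<forall>x y. L_eq x (one D) \<and> R_eq y (one D) \<longrightarrow> (\<exists>v. \<alpha> x y * v = 1)"
    and G_cellular: "\<forall>D\<in>D_classes. cellular (G D) \<alpha> st (\<Lambda>D D) (leD D) (MD D) (CD D)"
begin

definition \<Lambda>S :: "('a set \<times> 'l) set" where
  "\<Lambda>S = {(D, l). D \<in> D_classes \<and> l \<in> \<Lambda>D D}"

definition leS :: "'a set \<times> 'l \<Rightarrow> 'a set \<times> 'l \<Rightarrow> bool" where
  "leS = (\<lambda>(D1, l1) (D2, l2). D_less D1 D2 \<or> (D1 = D2 \<and> leD D1 l1 l2))"

definition MS :: "'a set \<times> 'l \<Rightarrow> ('a set \<times> 'm) set" where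
  "MS = (\<lambda>(D, l). L_classes_in D \<times> MD D l)"

abbreviation sandwich :: "'a set \<Rightarrow> 'a set \<Rightarrow> ('a \<Rightarrow> 'r) \<Rightarrow> 'a \<Rightarrow> 'r" where
  "sandwich L K c \<equiv> tmult \<alpha> (tmult \<alpha> (tsa_delta (st (u L))) c) (tsa_delta (u K))"

definition CS :: "'a set \<times> 'l \<Rightarrow> 'a set \<times> 'm \<Rightarrow> 'a set \<times> 'm \<Rightarrow> 'a \<Rightarrow> 'r" where
  "CS = (\<lambda>(D, l) (L, s) (K, t). sandwich L K (CD D l s t))"

abbreviation IS :: "(('a set \<times> 'l) \<times> ('a set \<times> 'm) \<times> ('a set \<times> 'm)) set" where
  "IS \<equiv> cell_index \<Lambda>S MS"

abbreviation IG :: "'a set \<Rightarrow> ('l \<times> 'm \<times> 'm) set" where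
  "IG D \<equiv> cell_index (\<Lambda>D D) (MD D)"

lemma \<Lambda>S_iff [simp]: "(D, l) \<in> \<Lambda>S \<longleftrightarrow> D \<in> D_classes \<and> l \<in> \<Lambda>D D"
  by (simp add: \<Lambda>S_def)

lemma leS_iff [simp]: "leS (D1, l1) (D2, l2) \<longleftrightarrow> D_less D1 D2 \<or> (D1 = D2 \<and> leD D1 l1 l2)"
  by (simp add: leS_def)

lemma MS_apply [simp]: "MS (D, l) = L_classes_in D \<times> MD D l"
  by (simp add: MS_def)

lemma CS_apply [simp]: "CS (D, l) (L, s) (K, t) = sandwich L K (CD D l s t)"
  by (simp add: CS_def)

lemma mem_IS:
  "((D, l), (L, s), (K, t)) \<in> IS \<longleftrightarrow>
     D \<in> D_classes \<and> l \<in> \<Lambda>D D \<and> L \<in> L_classes_in D \<and> K \<in> L_classes_in D \<and> s \<in> MD D l \<and> t \<in> MD D l"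
  by auto

context
  fixes D :: "'a set"
  assumes D: "D \<in> D_classes"
begin

lemma G_cellular_D: "cellular (G D) \<alpha> st (\<Lambda>D D) (leD D) (MD D) (CD D)"
  using G_cellular D by blast

lemma \<Lambda>D_finite: "finite (\<Lambda>D D)"
  using cellularD(1)[OF G_cellular_D] .

lemma leD_refl: "l \<in> \<Lambda>D D \<Longrightarrow> leD D l l"
  using cellularD(2)[OF G_cellular_D] by blast

lemma leD_antisym: "l \<in> \<Lambda>D D \<Longrightarrow> l' \<in> \<Lambda>D D \<Longrightarrow> leD D l l' \<Longrightarrow> leD D l' l \<Longrightarrow> l = l'"
  using cellularD(3)[OF G_cellular_D] by blast

lemma leD_trans:
  "l \<in> \<Lambda>D D \<Longrightarrow> l' \<in> \<Lambda>D D \<Longrightarrow> l'' \<in> \<Lambda>D D \<Longrightarrow> leD D l l' \<Longrightarrow> leD D l' l'' \<Longrightarrow> leD D l l''"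
  using cellularD(4)[OF G_cellular_D] by blast

lemma MD_finite: "l \<in> \<Lambda>D D \<Longrightarrow> finite (MD D l)"
  using cellularD(5)[OF G_cellular_D] by blast

lemma CD_carrier: "l \<in> \<Lambda>D D \<Longrightarrow> s \<in> MD D l \<Longrightarrow> t \<in> MD D l \<Longrightarrow> CD D l s t \<in> tsa_carrier (G D)"
  using cellularD(6)[OF G_cellular_D] by blast

lemma CD_unique_expansion:
  "f \<in> tsa_carrier (G D) \<Longrightarrow>
     \<exists>!c. (\<forall>j. j \<notin> IG D \<longrightarrow> c j = 0) \<and> f = (\<lambda>z. \<Sum>j\<in>IG D. c j * cell_basis (CD D) j z)"
  using cellularD(7)[OF G_cellular_D] by (rule bspec)

lemma CD_independent:
  assumes c0: "\<forall>j. j \<notin> IG D \<longrightarrow> c j = 0" and c: "\<And>z. (\<Sum>j\<in>IG D. c j * cell_basis (CD D) j z) = 0"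
  shows "c = (\<lambda>_. 0)"
proof -
  let ?P = "\<lambda>c. (\<forall>j. j \<notin> IG D \<longrightarrow> c j = 0) \<and> (\<lambda>z. 0) = (\<lambda>z. \<Sum>j\<in>IG D. c j * cell_basis (CD D) j z)"
  have "(\<lambda>z. 0) \<in> tsa_carrier (G D)" by (simp add: tsa_carrier_def)
  then have "\<exists>!c. ?P c" by (rule CD_unique_expansion)
  then obtain c' where c': "\<forall>y. ?P y \<longrightarrow> y = c'" by (rule ex1E) blast
  have "?P c" using c0 c by simp
  then have "c = c'" by (rule c'[rule_format])
  moreover have "?P (\<lambda>_. 0)" by simp
  then have "(\<lambda>_. 0) = c'" by (rule c'[rule_format])
  ultimately show ?thesis by simp
qed

lemma CD_star: "l \<in> \<Lambda>D D \<Longrightarrow> s \<in> MD D l \<Longrightarrow> t \<in> MD D l \<Longrightarrow> star_lin st (CD D l s t) = CD D l t s"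
  using cellularD(8)[OF G_cellular_D] by blast

lemma CD_C3:
  "l \<in> \<Lambda>D D \<Longrightarrow> s \<in> MD D l \<Longrightarrow> a \<in> tsa_carrier (G D) \<Longrightarrow> \<exists>r. \<forall>t\<in>MD D l.
     (\<lambda>z. tsa_mult (G D) \<alpha> a (CD D l s t) z - (\<Sum>s'\<in>MD D l. r s' * CD D l s' t z))
       \<in> cell_lower (\<Lambda>D D) (leD D) (MD D) (CD D) l"
  using cellularD(9)[OF G_cellular_D] by blast

lemma IG_finite: "finite (IG D)"
  using cell_index_finite \<Lambda>D_finite MD_finite by blast

lemma tsa_delta_carrier: "g \<in> G D \<Longrightarrow> tsa_delta g \<in> tsa_carrier (G D)"
  by (simp add: tsa_carrier_def)

end

lemma \<Lambda>S_finite: "finite \<Lambda>S"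
proof -
  have "\<Lambda>S = Sigma D_classes \<Lambda>D" by auto
  then show ?thesis using D_classes_finite \<Lambda>D_finite by simp
qed

lemma MS_finite: "l \<in> \<Lambda>S \<Longrightarrow> finite (MS l)"
  using MD_finite L_classes_in_finite by (cases l) auto

lemma IS_finite: "finite IS"
  using cell_index_finite \<Lambda>S_finite MS_finite by blast

lemma leS_partial_order:
  "(\<forall>i\<in>\<Lambda>S. leS i i) \<and> (\<forall>i\<in>\<Lambda>S. \<forall>j\<in>\<Lambda>S. leS i j \<and> leS j i \<longrightarrow> i = j)
    \<and> (\<forall>i\<in>\<Lambda>S. \<forall>j\<in>\<Lambda>S. \<forall>k\<in>\<Lambda>S. leS i j \<and> leS j k \<longrightarrow> leS i k)"
proof -
  have "(\<forall>i\<in>Sigma D_classes \<Lambda>D. leS i i)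
    \<and> (\<forall>i\<in>Sigma D_classes \<Lambda>D. \<forall>j\<in>Sigma D_classes \<Lambda>D. leS i j \<and> leS j i \<longrightarrow> i = j)
    \<and> (\<forall>i\<in>Sigma D_classes \<Lambda>D. \<forall>j\<in>Sigma D_classes \<Lambda>D. \<forall>k\<in>Sigma D_classes \<Lambda>D.
         leS i j \<and> leS j k \<longrightarrow> leS i k)"
    unfolding leS_def
  proof (rule lex_partial_order)
  qed (fact D_less_trans D_less_asym leD_refl leD_antisym leD_trans)+
  moreover have "\<Lambda>S = Sigma D_classes \<Lambda>D" by auto
  ultimately show ?thesis by (simp only:)
qed

definition sandwich_coeff :: "'a set \<Rightarrow> 'a set \<Rightarrow> 'a \<Rightarrow> 'r" where
  "sandwich_coeff L K g = \<alpha> (st (u L)) g * \<alpha> (st (u L) * g) (u K)"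

lemma sandwich_delta: "sandwich L K (tsa_delta g) = (\<lambda>z. sandwich_coeff L K g * tsa_delta (rees L K g) z)"
proof
  fix z
  have "sandwich L K (tsa_delta g) z
      = (\<Sum>y\<in>UNIV. if y = g then sandwich_coeff L K g * tsa_delta (rees L K g) z else 0)"
    unfolding tmult_delta_sandwich by (rule sum.cong) (auto simp: sandwich_coeff_def)
  then show "sandwich L K (tsa_delta g) z = sandwich_coeff L K g * tsa_delta (rees L K g) z" by simp
qed

lemma sandwich_sum: "sandwich L K (\<lambda>z. \<Sum>i\<in>A. c i * F i z) z = (\<Sum>i\<in>A. c i * sandwich L K (F i) z)"
proof -
  have "tmult \<alpha> (tsa_delta (st (u L))) (\<lambda>z. \<Sum>i\<in>A. c i * F i z)
      = (\<lambda>p. \<Sum>i\<in>A. c i * tmult \<alpha> (tsa_delta (st (u L))) (F i) p)"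
    by (rule ext) (rule tmult_sum_right)
  then show ?thesis by (simp add: tmult_sum_left)
qed

lemma sandwich_add: "sandwich L K (\<lambda>z. f z + g z) z = sandwich L K f z + sandwich L K g z"
  using sandwich_sum[where A="{True, False}" and c="\<lambda>_. 1" and F="\<lambda>b. if b then f else g"]
  by simp

context
  fixes D :: "'a set"
  assumes D: "D \<in> D_classes"
begin

lemma sandwich_coeff_unit:
  assumes L: "L \<in> L_classes_in D" and K: "K \<in> L_classes_in D" and g: "g \<in> G D"
  shows "\<exists>b. sandwich_coeff L K g * b = 1"
proof -
  have gR: "R_eq g (one D)" and gL: "L_eq g (one D)" using g H_class_iff by auto
  obtain b1 where b1: "\<alpha> (st (u L)) g * b1 = 1" using \<alpha>_unit D st_u_L_eq_one[OF D L] gR by blast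
  have "L_eq (st (u L) * g) (one D * g)" using L_eq_mult_right st_u_L_eq_one[OF D L] by blast
  then have "L_eq (st (u L) * g) (one D)" using G_elem(1)[OF D g] gL L_eq_trans by simp
  then obtain b2 where b2: "\<alpha> (st (u L) * g) (u K) * b2 = 1" using \<alpha>_unit D u_R_eq_one[OF D K] by blast
  have "sandwich_coeff L K g * (b1 * b2) = (\<alpha> (st (u L)) g * b1) * (\<alpha> (st (u L) * g) (u K) * b2)"
    by (simp add: sandwich_coeff_def mult_ac)
  then show ?thesis using b1 b2 by auto
qed

lemma sandwich_support:
  assumes c: "c \<in> tsa_carrier (G D)" and nz: "sandwich L K c z \<noteq> 0"
  shows "\<exists>g\<in>G D. z = rees L K g"
proof -
  obtain y where "(if rees L K y = z then \<alpha> (st (u L)) y * \<alpha> (st (u L) * y) (u K) * c y else 0) \<noteq> 0"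
    using nz[unfolded tmult_delta_sandwich] sum.not_neutral_contains_not_neutral by blast
  then have "rees L K y = z" "c y \<noteq> 0" by (auto split: if_splits)
  moreover have "y \<in> G D" using c \<open>c y \<noteq> 0\<close> by (auto simp: tsa_carrier_def)
  ultimately show ?thesis by blast
qed

lemma sandwich_at_rees:
  assumes L: "L \<in> L_classes_in D" and K: "K \<in> L_classes_in D" and g: "g \<in> G D"
    and c: "c \<in> tsa_carrier (G D)"
  shows "sandwich L K c (rees L K g) = sandwich_coeff L K g * c g"
proof -
  have "(if rees L K y = rees L K g then \<alpha> (st (u L)) y * \<alpha> (st (u L) * y) (u K) * c y else 0)
      = (if y = g then sandwich_coeff L K g * c g else 0)" for y
  proof (cases "y \<in> G D")
    case True
    then show ?thesis using rees_inj[OF D L K True g] by (auto simp: sandwich_coeff_def)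
  next
    case False
    then have "c y = 0" "y \<noteq> g" using c g by (auto simp: tsa_carrier_def)
    then show ?thesis by simp
  qed
  then show ?thesis unfolding tmult_delta_sandwich by simp
qed

end

lemma star_lin_sandwich: "star_lin st (sandwich L K c) = sandwich K L (star_lin st c)"
proof -
  have "star_lin st (sandwich L K c)
      = tmult \<alpha> (tsa_delta (st (u K))) (tmult \<alpha> (star_lin st c) (tsa_delta (u L)))"
    by (simp add: star_lin_tmult[OF anti_involution \<alpha>_st] star_lin_delta[OF anti_involution])
  then show ?thesis by (simp add: tmult_assoc[OF twisting])
qed

lemma CS_star: "l \<in> \<Lambda>S \<Longrightarrow> s \<in> MS l \<Longrightarrow> t \<in> MS l \<Longrightarrow> star_lin st (CS l s t) = CS l t s"
  by (cases l; cases s; cases t) (auto simp: star_lin_sandwich CD_star)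

definition block_index :: "'a set \<Rightarrow> 'a set \<Rightarrow> 'a set \<Rightarrow> 'l \<times> 'm \<times> 'm
    \<Rightarrow> ('a set \<times> 'l) \<times> ('a set \<times> 'm) \<times> ('a set \<times> 'm)" where
  "block_index D L K j = ((D, fst j), (L, fst (snd j)), (K, snd (snd j)))"

lemma block_index_in_IS:
  "D \<in> D_classes \<Longrightarrow> L \<in> L_classes_in D \<Longrightarrow> K \<in> L_classes_in D \<Longrightarrow> j \<in> IG D
    \<Longrightarrow> block_index D L K j \<in> IS"
  by (cases j) (simp add: block_index_def)

lemma inj_block_index: "inj (block_index D L K)"
  by (rule injI) (auto simp: block_index_def prod_eq_iff)

lemma CS_block_index [simp]: "cell_basis CS (block_index D L K j) = sandwich L K (cell_basis (CD D) j)"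
  by (simp add: block_index_def)

lemma sum_IS_block:
  assumes "D \<in> D_classes" "L \<in> L_classes_in D" "K \<in> L_classes_in D"
    and "\<And>i. i \<in> IS \<Longrightarrow> i \<notin> block_index D L K ` IG D \<Longrightarrow> F i = 0"
  shows "(\<Sum>i\<in>IS. F i) = (\<Sum>j\<in>IG D. F (block_index D L K j))"
proof -
  have "block_index D L K ` IG D \<subseteq> IS" using block_index_in_IS assms(1-3) by blast
  then have "(\<Sum>i\<in>IS. F i) = (\<Sum>i\<in>block_index D L K ` IG D. F i)"
    using assms(4) by (intro sum.mono_neutral_right IS_finite) auto
  also have "\<dots> = (\<Sum>j\<in>IG D. F (block_index D L K j))"
    using sum.reindex[OF inj_on_subset[OF inj_block_index subset_UNIV], of F] by simp
  finally show ?thesis .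
qed

definition block_lift :: "'a set \<Rightarrow> 'a set \<Rightarrow> 'a set \<Rightarrow> ('l \<times> 'm \<times> 'm \<Rightarrow> 'r)
    \<Rightarrow> ('a set \<times> 'l) \<times> ('a set \<times> 'm) \<times> ('a set \<times> 'm) \<Rightarrow> 'r" where
  "block_lift D L K d i = (if fst (fst i) = D \<and> fst (fst (snd i)) = L \<and> fst (snd (snd i)) = K
     then d (snd (fst i), snd (fst (snd i)), snd (snd (snd i))) else 0)"

lemma block_lift_off:
  assumes d0: "\<forall>j. j \<notin> IG D \<longrightarrow> d j = 0" and i: "i \<notin> block_index D L K ` IG D"
  shows "block_lift D L K d i = 0"
proof (cases "fst (fst i) = D \<and> fst (fst (snd i)) = L \<and> fst (snd (snd i)) = K")
  case True
  then have "i = block_index D L K (snd (fst i), snd (fst (snd i)), snd (snd (snd i)))"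
    by (simp add: block_index_def prod_eq_iff)
  then have "(snd (fst i), snd (fst (snd i)), snd (snd (snd i))) \<notin> IG D" using i by blast
  then show ?thesis using d0 True by (simp add: block_lift_def)
qed (auto simp: block_lift_def)

lemma sum_block_lift:
  assumes D: "D \<in> D_classes" and L: "L \<in> L_classes_in D" and K: "K \<in> L_classes_in D"
    and d0: "\<forall>j. j \<notin> IG D \<longrightarrow> d j = 0"
  shows "(\<Sum>i\<in>IS. block_lift D L K d i * cell_basis CS i z)
    = sandwich L K (\<lambda>z. \<Sum>j\<in>IG D. d j * cell_basis (CD D) j z) z"
proof -
  have "(\<Sum>i\<in>IS. block_lift D L K d i * cell_basis CS i z)
      = (\<Sum>j\<in>IG D. block_lift D L K d (block_index D L K j) * cell_basis CS (block_index D L K j) z)"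
    by (rule sum_IS_block[OF D L K]) (simp add: block_lift_off[OF d0])
  then show ?thesis by (simp add: sandwich_sum block_lift_def block_index_def)
qed

lemma tsa_delta_expansion:
  "\<exists>c. (\<forall>i. i \<notin> IS \<longrightarrow> c i = 0) \<and> (\<forall>i. c i \<noteq> 0 \<longrightarrow> fst (fst i) = D_class y)
      \<and> tsa_delta y = (\<lambda>z. \<Sum>i\<in>IS. c i * cell_basis CS i z)"
proof -
  define D L K where "D = D_class y" and "L = L_class (st y)" and "K = L_class y"
  have D: "D \<in> D_classes" and y: "y \<in> D" using D_class_in_D_classes D_class_self D_def by auto
  have L: "L \<in> L_classes_in D" and K: "K \<in> L_classes_in D"
    using L_class_in_D[OF D] st_mem_D[OF D y] y L_def K_def by auto
  obtain g where g: "g \<in> G D" and y_eq: "y = rees L K g"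
    using rees_surj[OF D y] unfolding L_def K_def by blast
  obtain b where b: "sandwich_coeff L K g * b = 1" using sandwich_coeff_unit[OF D L K g] by blast
  obtain d where d0: "\<forall>j. j \<notin> IG D \<longrightarrow> d j = 0"
    and d: "tsa_delta g = (\<lambda>z. \<Sum>j\<in>IG D. d j * cell_basis (CD D) j z)"
    using CD_unique_expansion[OF D tsa_delta_carrier[OF D g]] by blast
  define c where "c = block_lift D L K (\<lambda>j. b * d j)"
  have bd0: "\<forall>j. j \<notin> IG D \<longrightarrow> b * d j = 0" using d0 by simp
  have "tsa_delta y z = (\<Sum>i\<in>IS. c i * cell_basis CS i z)" for z
  proof -
    have "tsa_delta y z = b * sandwich L K (tsa_delta g) z"
      using b by (simp add: sandwich_delta y_eq mult_ac)
    also have "\<dots> = (\<Sum>i\<in>IS. c i * cell_basis CS i z)"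
      unfolding c_def sum_block_lift[OF D L K bd0] d sandwich_sum
      by (simp add: sum_distrib_left mult.assoc)
    finally show ?thesis .
  qed
  moreover have "c i = 0" if "i \<notin> IS" for i
  proof -
    have "i \<notin> block_index D L K ` IG D" using that block_index_in_IS[OF D L K] by auto
    then show ?thesis unfolding c_def by (rule block_lift_off[OF bd0])
  qed
  moreover have "fst (fst i) = D_class y" if "c i \<noteq> 0" for i
    using that unfolding c_def block_lift_def D_def by presburger
  ultimately show ?thesis by blast
qed

lemma CS_spans: "\<exists>c. (\<forall>i. i \<notin> IS \<longrightarrow> c i = 0) \<and> f = (\<lambda>z. \<Sum>i\<in>IS. c i * cell_basis CS i z)"
proof -
  have ex: "\<forall>y. \<exists>c. (\<forall>i. i \<notin> IS \<longrightarrow> c i = 0) \<and> tsa_delta y = (\<lambda>z. \<Sum>i\<in>IS. c i * cell_basis CS i z)"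
    using tsa_delta_expansion by blast
  obtain cy where cy: "\<forall>y. (\<forall>i. i \<notin> IS \<longrightarrow> cy y i = 0)
      \<and> tsa_delta y = (\<lambda>z. \<Sum>i\<in>IS. cy y i * cell_basis CS i z)"
    using choice[OF ex] by blast
  define c where "c i = (\<Sum>y\<in>UNIV. f y * cy y i)" for i
  have "f z = (\<Sum>i\<in>IS. c i * cell_basis CS i z)" for z
  proof -
    have "(\<Sum>i\<in>IS. c i * cell_basis CS i z) = (\<Sum>i\<in>IS. \<Sum>y\<in>UNIV. f y * (cy y i * cell_basis CS i z))"
      by (simp add: c_def sum_distrib_right mult.assoc)
    also have "\<dots> = (\<Sum>y\<in>UNIV. f y * (\<Sum>i\<in>IS. cy y i * cell_basis CS i z))"
      by (subst sum.swap) (simp add: sum_distrib_left)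
    also have "\<dots> = (\<Sum>y\<in>UNIV. f y * tsa_delta y z)"
      using cy by (metis (no_types))
    also have "\<dots> = f z" using sum_tsa_delta[of f z] by simp
    finally show ?thesis by simp
  qed
  moreover have "\<forall>i. i \<notin> IS \<longrightarrow> c i = 0" using cy by (simp add: c_def)
  ultimately show ?thesis by blast
qed

lemma CS_at_rees:
  assumes D: "D \<in> D_classes" and L: "L \<in> L_classes_in D" and K: "K \<in> L_classes_in D" and g: "g \<in> G D"
  shows "(\<Sum>i\<in>IS. d i * cell_basis CS i (rees L K g))
    = sandwich_coeff L K g * (\<Sum>j\<in>IG D. d (block_index D L K j) * cell_basis (CD D) j g)"
proof -
  have "cell_basis CS i (rees L K g) = 0" if i: "i \<in> IS" "i \<notin> block_index D L K ` IG D" for i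
  proof (rule ccontr)
    obtain D' l L' s K' t where i_eq: "i = ((D', l), (L', s), (K', t))" by (metis prod.exhaust)
    then have D': "D' \<in> D_classes" and l: "l \<in> \<Lambda>D D'" and s: "s \<in> MD D' l" and t: "t \<in> MD D' l"
      and L': "L' \<in> L_classes_in D'" and K': "K' \<in> L_classes_in D'" using i mem_IS by auto
    assume "cell_basis CS i (rees L K g) \<noteq> 0"
    then have "sandwich L' K' (CD D' l s t) (rees L K g) \<noteq> 0" using i_eq by simp
    then obtain g' where "g' \<in> G D'" "rees L K g = rees L' K' g'"
      using sandwich_support[OF D' CD_carrier[OF D' l s t]] by metis
    then have "D' = D" "L' = L" "K' = K" using rees_eq_iff[OF D L K g D' L' K'] by auto
    then have "i = block_index D L K (l, s, t)" "(l, s, t) \<in> IG D"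
      using i_eq l s t by (auto simp: block_index_def)
    then show False using i by blast
  qed
  then have "(\<Sum>i\<in>IS. d i * cell_basis CS i (rees L K g))
      = (\<Sum>j\<in>IG D. d (block_index D L K j) * sandwich L K (cell_basis (CD D) j) (rees L K g))"
    by (simp add: sum_IS_block[OF D L K])
  also have "\<dots> = sandwich_coeff L K g * (\<Sum>j\<in>IG D. d (block_index D L K j) * cell_basis (CD D) j g)"
    using sandwich_at_rees[OF D L K g] CD_carrier[OF D]
    by (auto simp: sum_distrib_left mult_ac intro!: sum.cong)
  finally show ?thesis .
qed

lemma CS_independent:
  assumes d0: "\<forall>i. i \<notin> IS \<longrightarrow> d i = 0" and d: "\<forall>z. (\<Sum>i\<in>IS. d i * cell_basis CS i z) = 0"
  shows "d i0 = 0"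
proof (cases "i0 \<in> IS")
  case False
  then show ?thesis using d0 by blast
next
  case True
  obtain D l L s K t where i0: "i0 = ((D, l), (L, s), (K, t))" by (metis prod.exhaust)
  then have D: "D \<in> D_classes" and L: "L \<in> L_classes_in D" and K: "K \<in> L_classes_in D"
    and j0: "(l, s, t) \<in> IG D" using True mem_IS by auto
  define d' where "d' j = (if j \<in> IG D then d (block_index D L K j) else 0)" for j
  have "(\<Sum>j\<in>IG D. d' j * cell_basis (CD D) j g) = 0" for g
  proof (cases "g \<in> G D")
    case False
    then have "cell_basis (CD D) j g = 0" if "j \<in> IG D" for j
      using CD_carrier[OF D] that by (cases j) (auto simp: tsa_carrier_def)
    then show ?thesis by simp
  next
    case g: True
    obtain b where b: "sandwich_coeff L K g * b = 1" using sandwich_coeff_unit[OF D L K g] by blast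
    have "sandwich_coeff L K g * (\<Sum>j\<in>IG D. d' j * cell_basis (CD D) j g) = 0"
      using d CS_at_rees[OF D L K g, of d] by (simp add: d'_def)
    then have "b * sandwich_coeff L K g * (\<Sum>j\<in>IG D. d' j * cell_basis (CD D) j g) = 0"
      by (simp add: mult.assoc)
    then show ?thesis using b by (simp add: mult.commute)
  qed
  then have "d' = (\<lambda>_. 0)" by (intro CD_independent[OF D]) (auto simp: d'_def)
  then have "d' (l, s, t) = 0" by simp
  then show ?thesis using j0 by (simp add: d'_def block_index_def i0)
qed

lemma CS_unique_expansion:
  "\<exists>!c. (\<forall>i. i \<notin> IS \<longrightarrow> c i = 0) \<and> f = (\<lambda>z. \<Sum>i\<in>IS. c i * cell_basis CS i z)"
proof -
  obtain c where c: "(\<forall>i. i \<notin> IS \<longrightarrow> c i = 0) \<and> f = (\<lambda>z. \<Sum>i\<in>IS. c i * cell_basis CS i z)"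
    using CS_spans by blast
  moreover have "c' = c" if c': "(\<forall>i. i \<notin> IS \<longrightarrow> c' i = 0) \<and> f = (\<lambda>z. \<Sum>i\<in>IS. c' i * cell_basis CS i z)" for c'
  proof
    fix i
    have "(\<Sum>i\<in>IS. (c' i - c i) * cell_basis CS i z) = 0" for z
      using fun_cong[OF conjunct2[OF c], of z] fun_cong[OF conjunct2[OF c'], of z]
      by (simp add: left_diff_distrib sum_subtractf)
    then have "c' i - c i = 0" using c c' by (intro CS_independent) auto
    then show "c' i = c i" by simp
  qed
  ultimately show ?thesis by blast
qed

abbreviation lowerS :: "'a set \<times> 'l \<Rightarrow> ('a \<Rightarrow> 'r) set" where
  "lowerS l \<equiv> cell_lower \<Lambda>S leS MS CS l"

lemma tsa_delta_lower:
  assumes less: "D_less (D_class y) D0"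
  shows "tsa_delta y \<in> lowerS (D0, l0)"
proof -
  obtain c where cD: "\<forall>i. c i \<noteq> 0 \<longrightarrow> fst (fst i) = D_class y"
    and y: "tsa_delta y = (\<lambda>z. \<Sum>i\<in>IS. c i * cell_basis CS i z)"
    using tsa_delta_expansion by blast
  have "(\<lambda>z. c i * cell_basis CS i z) \<in> lowerS (D0, l0)" if i: "i \<in> IS" for i
  proof (cases "c i = 0")
    case True
    then show ?thesis using cell_lower_zero by simp
  next
    case False
    obtain l p where "i = ((D_class y, l), p)" using cD False by (metis prod.collapse)
    then have "i \<in> cell_index_below \<Lambda>S leS MS (D0, l0)"
      using i less by (auto simp: cell_index_below_def D_less_def)
    then show ?thesis by (rule cell_lower_scale[OF cell_lower_basis[OF IS_finite]])
  qed
  then show ?thesis unfolding y by (rule cell_lower_sum[OF IS_finite])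
qed

lemma sandwich_lower:
  assumes D0: "D0 \<in> D_classes" and L: "L \<in> L_classes_in D0" and K: "K \<in> L_classes_in D0"
    and f: "f \<in> cell_lower (\<Lambda>D D0) (leD D0) (MD D0) (CD D0) l0"
  shows "sandwich L K f \<in> lowerS (D0, l0)"
proof -
  let ?J = "cell_index_below (\<Lambda>D D0) (leD D0) (MD D0) l0"
  obtain c where f_eq: "f = (\<lambda>z. \<Sum>j\<in>?J. c j * cell_basis (CD D0) j z)"
    using f unfolding cell_lower_iff by blast
  have "sandwich L K f = (\<lambda>z. \<Sum>j\<in>?J. c j * cell_basis CS (block_index D0 L K j) z)"
    unfolding f_eq by (rule ext) (simp add: sandwich_sum)
  moreover have "finite ?J"
    using IG_finite[OF D0] by (simp add: cell_index_below_def)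
  moreover have "(\<lambda>z. c j * cell_basis CS (block_index D0 L K j) z) \<in> lowerS (D0, l0)" if "j \<in> ?J" for j
  proof -
    have "block_index D0 L K j \<in> cell_index_below \<Lambda>S leS MS (D0, l0)"
      using that D0 L K by (cases j) (auto simp: cell_index_below_def block_index_def)
    then show ?thesis by (rule cell_lower_scale[OF cell_lower_basis[OF IS_finite]])
  qed
  ultimately show ?thesis by (simp add: cell_lower_sum)
qed

lemma D_less_mult_outside:
  assumes D0: "D0 \<in> D_classes" and L: "L \<in> L_classes_in D0"
    and nD: "x * st (u L) \<notin> D0"
  shows "D_less (D_class (x * rees L K g)) D0"
proof -
  have Jw: "J_le (x * rees L K g) (x * st (u L))" by (metis J_le_mult_left mult.assoc)
  have J1: "J_le (x * st (u L)) (one D0)"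
    using st_mem_D[OF D0 u_in_D[OF D0 L]] mem_D_iff[OF D0] J_le_mult_right J_le_trans by blast
  have "D_class (x * rees L K g) \<noteq> D0"
  proof
    assume "D_class (x * rees L K g) = D0"
    then have "J_le (one D0) (x * rees L K g)" using D_class_self mem_D_iff[OF D0] by metis
    then show False using Jw J1 nD mem_D_iff[OF D0] J_le_trans by blast
  qed
  moreover have "D_le (D_class (x * rees L K g)) (D_class (one D0))"
    using D_le_D_class_iff Jw J1 J_le_trans by blast
  ultimately show ?thesis
    using D_class_eq_if_mem[OF D0 one_in_D[OF D0]] by (simp add: D_less_def)
qed

lemma tmult_delta_sandwich_outside:
  assumes D0: "D0 \<in> D_classes" and L: "L \<in> L_classes_in D0"
    and c: "c \<in> tsa_carrier (G D0)" and nD: "x * st (u L) \<notin> D0"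
  shows "tmult \<alpha> (tsa_delta x) (sandwich L K c) \<in> lowerS (D0, l0)"
proof -
  let ?F = "sandwich L K c"
  have "tmult \<alpha> (tsa_delta x) ?F = (\<lambda>z. \<Sum>w\<in>UNIV. (\<alpha> x w * ?F w) * tsa_delta (x * w) z)"
    unfolding tmult_delta_left by (intro ext sum.cong) auto
  moreover have "(\<lambda>z. (\<alpha> x w * ?F w) * tsa_delta (x * w) z) \<in> lowerS (D0, l0)" for w
  proof (cases "?F w = 0")
    case True
    then show ?thesis using cell_lower_zero by simp
  next
    case False
    then obtain g where "w = rees L K g" using sandwich_support[OF D0 c] by blast
    then have "tsa_delta (x * w) \<in> lowerS (D0, l0)"
      using tsa_delta_lower D_less_mult_outside[OF D0 L nD] by blast
    then show ?thesis by (rule cell_lower_scale)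
  qed
  ultimately show ?thesis by (simp add: cell_lower_sum)
qed

lemma tmult_delta_sandwich_shift:
  assumes D0: "D0 \<in> D_classes" and L': "L' \<in> L_classes_in D0" and h: "h \<in> G D0"
    and xe: "x * st (u L) = st (u L') * h"
  shows "\<exists>k. \<forall>K c. tmult \<alpha> (tsa_delta x) (sandwich L K c) = (\<lambda>z. k * sandwich L' K (tmult \<alpha> (tsa_delta h) c) z)"
proof -
  have "R_eq h (one D0)" using h H_class_iff by blast
  then obtain \<gamma> where \<gamma>: "\<alpha> (st (u L')) h * \<gamma> = 1"
    using \<alpha>_unit D0 st_u_L_eq_one[OF D0 L'] by blast
  \<comment> \<open>\<open>\<delta>(x) \<delta>(u\<^sub>L\<^sup>*) = \<alpha>(x, u\<^sub>L\<^sup>*) \<delta>(u\<^sub>L\<^sub>'\<^sup>* h)\<close>, and \<open>\<gamma>\<close> inverts the twist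
    \<open>\<alpha>(u\<^sub>L\<^sub>'\<^sup>*, h)\<close> of \<open>\<delta>(u\<^sub>L\<^sub>'\<^sup>*) \<delta>(h)\<close>.\<close>
  define k where "k = \<alpha> x (st (u L)) * \<gamma>"
  have dd: "tmult \<alpha> (tsa_delta x) (tsa_delta (st (u L)))
      = (\<lambda>z. k * tmult \<alpha> (tsa_delta (st (u L'))) (tsa_delta h) z)"
  proof
    fix z
    have "k * tmult \<alpha> (tsa_delta (st (u L'))) (tsa_delta h) z
        = \<alpha> x (st (u L)) * (\<alpha> (st (u L')) h * \<gamma>) * tsa_delta (st (u L') * h) z"
      by (simp add: k_def tmult_delta_delta mult_ac)
    then show "tmult \<alpha> (tsa_delta x) (tsa_delta (st (u L))) z
        = k * tmult \<alpha> (tsa_delta (st (u L'))) (tsa_delta h) z"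
      using \<gamma> xe by (simp add: tmult_delta_delta)
  qed
  have "tmult \<alpha> (tsa_delta x) (sandwich L K c) = (\<lambda>z. k * sandwich L' K (tmult \<alpha> (tsa_delta h) c) z)" for K c
  proof
    fix z
    have "tmult \<alpha> (tsa_delta x) (sandwich L K c)
        = tmult \<alpha> (tmult \<alpha> (tmult \<alpha> (tsa_delta x) (tsa_delta (st (u L)))) c) (tsa_delta (u K))"
      by (simp add: tmult_assoc[OF twisting])
    then show "tmult \<alpha> (tsa_delta x) (sandwich L K c) z = k * sandwich L' K (tmult \<alpha> (tsa_delta h) c) z"
      unfolding dd by (simp add: tmult_scale_left[abs_def] tmult_scale_left tmult_assoc[OF twisting])
  qed
  then show ?thesis by blast
qed

lemma sum_MS_concentrated:
  assumes D0: "D0 \<in> D_classes" and L': "L' \<in> L_classes_in D0"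
  shows "(\<Sum>s'\<in>MS (D0, l0). (case s' of (L'', s'') \<Rightarrow> if L'' = L' then k * r s'' else 0)
            * CS (D0, l0) s' (K, t) z)
         = k * (\<Sum>s'\<in>MD D0 l0. r s' * sandwich L' K (CD D0 l0 s' t) z)"
  (is "(\<Sum>s'\<in>_. ?c s' * _) = _")
proof -
  have "(\<Sum>s'\<in>MS (D0, l0). ?c s' * CS (D0, l0) s' (K, t) z)
      = (\<Sum>L''\<in>L_classes_in D0. \<Sum>s''\<in>MD D0 l0. ?c (L'', s'') * sandwich L'' K (CD D0 l0 s'' t) z)"
    by (subst sum.cartesian_product) (auto simp: CS_def intro!: sum.cong)
  also have "\<dots> = (\<Sum>L''\<in>L_classes_in D0.
      if L'' = L' then (\<Sum>s''\<in>MD D0 l0. k * r s'' * sandwich L' K (CD D0 l0 s'' t) z) else 0)"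
    by (rule sum.cong) auto
  also have "\<dots> = k * (\<Sum>s'\<in>MD D0 l0. r s' * sandwich L' K (CD D0 l0 s' t) z)"
    using L' L_classes_in_finite[OF D0] by (simp add: sum_distrib_left mult.assoc)
  finally show ?thesis .
qed

lemma CS_C3_delta_inside:
  assumes D0: "D0 \<in> D_classes" and l0: "l0 \<in> \<Lambda>D D0" and L: "L \<in> L_classes_in D0"
    and s1: "s1 \<in> MD D0 l0" and inD: "x * st (u L) \<in> D0"
  shows "\<exists>r. \<forall>K\<in>L_classes_in D0. \<forall>t1\<in>MD D0 l0.
     (\<lambda>z. tmult \<alpha> (tsa_delta x) (CS (D0, l0) (L, s1) (K, t1)) z
        - (\<Sum>s'\<in>MS (D0, l0). r s' * CS (D0, l0) s' (K, t1) z)) \<in> lowerS (D0, l0)"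
proof -
  obtain L' h where L': "L' \<in> L_classes_in D0" and h: "h \<in> G D0" and xe: "x * st (u L) = st (u L') * h"
    using left_mult_st_u[OF D0 L inD] by blast
  obtain k where k: "\<And>K c. tmult \<alpha> (tsa_delta x) (sandwich L K c)
      = (\<lambda>z. k * sandwich L' K (tmult \<alpha> (tsa_delta h) c) z)"
    using tmult_delta_sandwich_shift[OF D0 L' h xe] by blast
  obtain rG where rG: "\<forall>t\<in>MD D0 l0. (\<lambda>z. tsa_mult (G D0) \<alpha> (tsa_delta h) (CD D0 l0 s1 t) z
      - (\<Sum>s'\<in>MD D0 l0. rG s' * CD D0 l0 s' t z)) \<in> cell_lower (\<Lambda>D D0) (leD D0) (MD D0) (CD D0) l0"
    using CD_C3[OF D0 l0 s1 tsa_delta_carrier[OF D0 h]] by blast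
  define r where "r = (\<lambda>(L'', s''). if L'' = L' then k * rG s'' else 0)"
  show ?thesis
  proof (intro exI[of _ r] ballI)
    fix K t1 assume K: "K \<in> L_classes_in D0" and t1: "t1 \<in> MD D0 l0"
    define rest where "rest = (\<lambda>z. tmult \<alpha> (tsa_delta h) (CD D0 l0 s1 t1) z
        - (\<Sum>s'\<in>MD D0 l0. rG s' * CD D0 l0 s' t1 z))"
    have rest: "rest \<in> cell_lower (\<Lambda>D D0) (leD D0) (MD D0) (CD D0) l0"
      using rG[rule_format, OF t1] tsa_mult_eq_tmult[OF tsa_delta_carrier[OF D0 h] CD_carrier[OF D0 l0 s1 t1]]
      by (simp add: rest_def)
    have "tmult \<alpha> (tsa_delta h) (CD D0 l0 s1 t1) = (\<lambda>z. (\<Sum>s'\<in>MD D0 l0. rG s' * CD D0 l0 s' t1 z) + rest z)"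
      by (simp add: rest_def)
    then have lhs: "tmult \<alpha> (tsa_delta x) (CS (D0, l0) (L, s1) (K, t1)) z
        = k * (\<Sum>s'\<in>MD D0 l0. rG s' * sandwich L' K (CD D0 l0 s' t1) z) + k * sandwich L' K rest z" for z
      by (simp add: k sandwich_add sandwich_sum distrib_left)
    have rhs: "(\<Sum>s'\<in>MS (D0, l0). r s' * CS (D0, l0) s' (K, t1) z)
        = k * (\<Sum>s'\<in>MD D0 l0. rG s' * sandwich L' K (CD D0 l0 s' t1) z)" for z
      unfolding r_def by (rule sum_MS_concentrated[OF D0 L'])
    have "(\<lambda>z. tmult \<alpha> (tsa_delta x) (CS (D0, l0) (L, s1) (K, t1)) z
        - (\<Sum>s'\<in>MS (D0, l0). r s' * CS (D0, l0) s' (K, t1) z)) = (\<lambda>z. k * sandwich L' K rest z)"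
      (is "?diff = _") unfolding lhs rhs by simp
    then show "?diff \<in> lowerS (D0, l0)"
      using cell_lower_scale[OF sandwich_lower[OF D0 L' K rest]] by simp
  qed
qed

lemma CS_C3_delta:
  assumes l: "l \<in> \<Lambda>S" and s: "s \<in> MS l"
  shows "\<exists>r. \<forall>t\<in>MS l. (\<lambda>z. tmult \<alpha> (tsa_delta x) (CS l s t) z - (\<Sum>s'\<in>MS l. r s' * CS l s' t z)) \<in> lowerS l"
proof -
  obtain D0 l0 L s1 where ls: "l = (D0, l0)" "s = (L, s1)" by (metis prod.exhaust)
  then have D0: "D0 \<in> D_classes" and l0: "l0 \<in> \<Lambda>D D0" and L: "L \<in> L_classes_in D0"
    and s1: "s1 \<in> MD D0 l0" using l s by auto
  show ?thesis
  proof (cases "x * st (u L) \<in> D0")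
    case True
    then show ?thesis using CS_C3_delta_inside[OF D0 l0 L s1] by (auto simp: ls)
  next
    case False
    have "tmult \<alpha> (tsa_delta x) (CS l s (K, t1)) \<in> lowerS l" if "t1 \<in> MD D0 l0" for K t1
      using tmult_delta_sandwich_outside[OF D0 L CD_carrier[OF D0 l0 s1 that] False] by (simp add: ls)
    then show ?thesis by (intro exI[of _ "\<lambda>_. 0"]) (auto simp: ls)
  qed
qed

lemma CS_C3:
  assumes l: "l \<in> \<Lambda>S" and s: "s \<in> MS l"
  shows "\<exists>r. \<forall>t\<in>MS l. (\<lambda>z. tmult \<alpha> a (CS l s t) z - (\<Sum>s'\<in>MS l. r s' * CS l s' t z)) \<in> lowerS l"
proof -
  have "\<forall>x. \<exists>r. \<forall>t\<in>MS l.
      (\<lambda>z. tmult \<alpha> (tsa_delta x) (CS l s t) z - (\<Sum>s'\<in>MS l. r s' * CS l s' t z)) \<in> lowerS l"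
    using CS_C3_delta[OF l s] by blast
  then obtain R where R: "\<forall>x. \<forall>t\<in>MS l.
      (\<lambda>z. tmult \<alpha> (tsa_delta x) (CS l s t) z - (\<Sum>s'\<in>MS l. R x s' * CS l s' t z)) \<in> lowerS l"
    by (rule choice[THEN exE]) blast
  define r where "r s' = (\<Sum>x\<in>UNIV. a x * R x s')" for s'
  have "(\<lambda>z. tmult \<alpha> a (CS l s t) z - (\<Sum>s'\<in>MS l. r s' * CS l s' t z)) \<in> lowerS l" if t: "t \<in> MS l" for t
  proof -
    have "(\<Sum>s'\<in>MS l. r s' * CS l s' t z) = (\<Sum>x\<in>UNIV. a x * (\<Sum>s'\<in>MS l. R x s' * CS l s' t z))" for z
      by (simp add: r_def sum_distrib_left sum_distrib_right mult.assoc sum.swap[of _ "MS l"])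
    then have "(\<lambda>z. tmult \<alpha> a (CS l s t) z - (\<Sum>s'\<in>MS l. r s' * CS l s' t z))
        = (\<lambda>z. \<Sum>x\<in>UNIV. a x * (tmult \<alpha> (tsa_delta x) (CS l s t) z - (\<Sum>s'\<in>MS l. R x s' * CS l s' t z)))"
      by (subst tmult_expand_left) (simp add: right_diff_distrib sum_subtractf)
    moreover have "(\<lambda>z. \<Sum>x\<in>UNIV. a x * (tmult \<alpha> (tsa_delta x) (CS l s t) z
        - (\<Sum>s'\<in>MS l. R x s' * CS l s' t z))) \<in> lowerS l"
      using R t by (intro cell_lower_sum cell_lower_scale) auto
    ultimately show ?thesis by simp
  qed
  then show ?thesis by blast
qed

theorem cellular_S: "cellular UNIV \<alpha> st \<Lambda>S leS MS CS"
  unfolding cellular_def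
proof (intro conjI)
  show "finite \<Lambda>S" by (rule \<Lambda>S_finite)
  show "\<forall>l\<in>\<Lambda>S. leS l l"
    and "\<forall>a\<in>\<Lambda>S. \<forall>b\<in>\<Lambda>S. leS a b \<and> leS b a \<longrightarrow> a = b"
    and "\<forall>a\<in>\<Lambda>S. \<forall>b\<in>\<Lambda>S. \<forall>c\<in>\<Lambda>S. leS a b \<and> leS b c \<longrightarrow> leS a c"
    using leS_partial_order by blast+
  show "\<forall>l\<in>\<Lambda>S. finite (MS l)" using MS_finite by blast
  show "\<forall>l\<in>\<Lambda>S. \<forall>s\<in>MS l. \<forall>t\<in>MS l. CS l s t \<in> tsa_carrier UNIV" by simp
  show "\<forall>f\<in>tsa_carrier UNIV. \<exists>!c. (\<forall>i. i \<notin> IS \<longrightarrow> c i = 0) \<and> f = (\<lambda>z. \<Sum>i\<in>IS. c i * cell_basis CS i z)"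
    using CS_unique_expansion by (intro ballI)
  show "\<forall>f\<in>(tsa_carrier UNIV :: ('a \<Rightarrow> 'r) set). star_lin st f \<in> tsa_carrier UNIV \<and> star_lin st (star_lin st f) = f"
    by (simp add: star_lin_def)
  show "\<forall>f\<in>tsa_carrier UNIV. \<forall>g\<in>tsa_carrier UNIV. star_lin st (tmult \<alpha> f g) = tmult \<alpha> (star_lin st g) (star_lin st f)"
    by (simp add: star_lin_tmult[OF anti_involution \<alpha>_st])
  show "\<forall>l\<in>\<Lambda>S. \<forall>s\<in>MS l. \<forall>t\<in>MS l. star_lin st (CS l s t) = CS l t s"
    using CS_star by blast
  show "\<forall>l\<in>\<Lambda>S. \<forall>s\<in>MS l. \<forall>a\<in>tsa_carrier UNIV. \<exists>r. \<forall>t\<in>MS l.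
      (\<lambda>z. tmult \<alpha> a (CS l s t) z - (\<Sum>s'\<in>MS l. r s' * CS l s' t z)) \<in> lowerS l"
    using CS_C3 by blast
qed

end

theorem corollary6:
  fixes st :: "'a::{finite,semigroup_mult} \<Rightarrow> 'a"
    and \<alpha> :: "'a \<Rightarrow> 'a \<Rightarrow> 'r::comm_ring_1"
    and one :: "'a set \<Rightarrow> 'a"
    and \<Lambda>D :: "'a set \<Rightarrow> 'l set"
    and leD :: "'a set \<Rightarrow> 'l \<Rightarrow> 'l \<Rightarrow> bool"
    and MD :: "'a set \<Rightarrow> 'l \<Rightarrow> 'm set"
    and CD :: "'a set \<Rightarrow> 'l \<Rightarrow> 'm \<Rightarrow> 'm \<Rightarrow> 'a \<Rightarrow> 'r"
    and u :: "'a set \<Rightarrow> 'a"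
  assumes "anti_involution st"
    and "twisting \<alpha>"
    and "\<forall>x y. \<alpha> x y = \<alpha> (st y) (st x)"
    and "\<forall>D\<in>D_classes. one D \<in> D \<and> one D * one D = one D \<and> st (one D) = one D"
    and "\<forall>D\<in>D_classes. \<forall>x y. L_eq x (one D) \<and> R_eq y (one D) \<longrightarrow> (\<exists>v. \<alpha> x y * v = 1)"
    and "\<forall>D\<in>D_classes. cellular (H_class (one D)) \<alpha> st (\<Lambda>D D) (leD D) (MD D) (CD D)"
    and "\<forall>D\<in>D_classes. \<forall>L\<in>L_classes_in D. u L \<in> L \<and> R_eq (u L) (one D)"
  shows "cellular UNIV \<alpha> st
           {(D, l). D \<in> D_classes \<and> l \<in> \<Lambda>D D}
           (\<lambda>(D1, l1) (D2, l2). D_less D1 D2 \<or> (D1 = D2 \<and> leD D1 l1 l2))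
           (\<lambda>(D, l). L_classes_in D \<times> MD D l)
           (\<lambda>(D, l) (L, s) (K, t).
              tsa_mult UNIV \<alpha> (tsa_mult UNIV \<alpha> (tsa_delta (st (u L))) (CD D l s t)) (tsa_delta (u K)))"
proof -
  interpret twisted_cell_datum st one u \<alpha> \<Lambda>D leD MD CD
    using assms by unfold_locales
  show ?thesis
    using cellular_S unfolding \<Lambda>S_def leS_def MS_def CS_def .
qed

end
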